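(* Let $G$ be a residually finite group and let $(\Gamma_n)_{n\in\mathbb{N}}$ be a decreasing sequence of finite index normal subgroups of $G$ with $\bigcap_n\Gamma_n=\{1_G\}$. Let $\overleftarrow{G}$ be the $G$-odometer associated to $(\Gamma_n)$. Then there exists a free regular Toeplitz $G$-subshift $X\subseteq\{0,1\}^G$ which is an almost one-to-one extension of $\overleftarrow{G}$.
   Context: Shift: $\sigma^gx(h)=x(g^{-1}h)$. $\mathrm{Per}(x,\Gamma,\alpha)=\{g: x(\gamma g)=\alpha\ \forall\gamma\in\Gamma\}$, $\mathrm{Per}(x,\Gamma)=\bigcup_\alpha\mathrm{Per}(x,\Gamma,\alpha)$. $\eta$ is a Toeplitz array if each $g\in G$ lies in $\mathrm{Per}(\eta,\Gamma)$ for some finite index $\Gamma$; a Toeplitz subshift is the orbit closure of a Toeplitz array. It is free if $\sigma^gx=x$ implies $g=1_G$, and regular if it carries a $\sigma$-invariant Borel probability measure giving full measure to the set of its elements that are Toeplitz arrays. The $G$-odometer of $(\Gamma_n)$ is $\{(x_n)\in\prod_nG/\Gamma_n: x_{n+1}\mapsto x_n$ under canonical projections$\}$ with coordinatewise left multiplication. An almost one-to-one extension of a minimal system $Y$ is a system $X$ with a factor map $X\to Y$ such that some point of $Y$ has exactly one preimage. *)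

theory Defs
  imports "HOL-Analysis.Analysis" "HOL-Probability.Probability"
begin

text \<open>The group G is the ambient type 'g of class group_add (written additively:
  + is the group operation, 0 the unit, uminus the inverse; not assumed commutative).
  Configurations in {0,1}^G are functions 'g \<Rightarrow> bool, with the product topology
  (the library's function-space topology over the discrete space bool).\<close>

definition subgrp :: "'g::group_add set \<Rightarrow> bool" where
  "subgrp H \<longleftrightarrow> 0 \<in> H \<and> (\<forall>a\<in>H. \<forall>b\<in>H. a + b \<in> H) \<and> (\<forall>a\<in>H. - a \<in> H)"

definition normal_subgrp :: "'g::group_add set \<Rightarrow> bool" where
  "normal_subgrp H \<longleftrightarrow> subgrp H \<and> (\<forall>g. \<forall>h\<in>H. g + h + - g \<in> H)"

definition lcoset :: "'g::group_add \<Rightarrow> 'g set \<Rightarrow> 'g set" where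
  "lcoset g H = (\<lambda>h. g + h) ` H"

definition cosets :: "'g::group_add set \<Rightarrow> 'g set set" where
  "cosets H = range (\<lambda>g. lcoset g H)"

definition finite_index :: "'g::group_add set \<Rightarrow> bool" where
  "finite_index H \<longleftrightarrow> subgrp H \<and> finite (cosets H)"

definition residually_finite :: "'g::group_add itself \<Rightarrow> bool" where
  "residually_finite _ \<longleftrightarrow>
     (\<forall>g::'g. g \<noteq> 0 \<longrightarrow> (\<exists>H. normal_subgrp H \<and> finite_index H \<and> g \<notin> H))"

definition shift :: "'g::group_add \<Rightarrow> ('g \<Rightarrow> 'a) \<Rightarrow> ('g \<Rightarrow> 'a)" where
  "shift g x = (\<lambda>h. x (- g + h))"

definition Per_val :: "('g::group_add \<Rightarrow> 'a) \<Rightarrow> 'g set \<Rightarrow> 'a \<Rightarrow> 'g set" where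
  "Per_val x \<Gamma> \<alpha> = {g. \<forall>\<gamma>\<in>\<Gamma>. x (\<gamma> + g) = \<alpha>}"

definition Per :: "('g::group_add \<Rightarrow> 'a) \<Rightarrow> 'g set \<Rightarrow> 'g set" where
  "Per x \<Gamma> = (\<Union>\<alpha>. Per_val x \<Gamma> \<alpha>)"

definition toeplitz_array :: "('g::group_add \<Rightarrow> 'a) \<Rightarrow> bool" where
  "toeplitz_array \<eta> \<longleftrightarrow> (\<forall>g. \<exists>\<Gamma>. finite_index \<Gamma> \<and> g \<in> Per \<eta> \<Gamma>)"

definition orbit_closure :: "('g::group_add \<Rightarrow> 'a::topological_space) \<Rightarrow> ('g \<Rightarrow> 'a) set" where
  "orbit_closure x = closure (range (\<lambda>g. shift g x))"

definition toeplitz_subshift :: "('g::group_add \<Rightarrow> 'a::topological_space) set \<Rightarrow> bool" where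
  "toeplitz_subshift X \<longleftrightarrow> (\<exists>\<eta>. toeplitz_array \<eta> \<and> X = orbit_closure \<eta>)"

definition free_shift :: "('g::group_add \<Rightarrow> 'a) set \<Rightarrow> bool" where
  "free_shift X \<longleftrightarrow> (\<forall>x\<in>X. \<forall>g. shift g x = x \<longrightarrow> g = 0)"

definition regular_shift :: "('g::group_add \<Rightarrow> 'a::topological_space) set \<Rightarrow> bool" where
  "regular_shift X \<longleftrightarrow>
     (\<exists>M. prob_space M \<and> sets M = sets (restrict_space borel X) \<and>
          (\<forall>g. \<forall>A\<in>sets M. emeasure M ((shift g -` A) \<inter> X) = emeasure M A) \<and>
          (AE x in M. toeplitz_array x))"

definition odometer :: "(nat \<Rightarrow> 'g::group_add set) \<Rightarrow> (nat \<Rightarrow> 'g set) set" where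
  "odometer \<Gamma> = {x. (\<forall>n. x n \<in> cosets (\<Gamma> n)) \<and>
      (\<forall>n g. x (Suc n) = lcoset g (\<Gamma> (Suc n)) \<longrightarrow> x n = lcoset g (\<Gamma> n))}"

definition odometer_act :: "'g::group_add \<Rightarrow> (nat \<Rightarrow> 'g set) \<Rightarrow> (nat \<Rightarrow> 'g set)" where
  "odometer_act g x = (\<lambda>n. (\<lambda>h. g + h) ` x n)"

definition odometer_top :: "(nat \<Rightarrow> 'g::group_add set) \<Rightarrow> (nat \<Rightarrow> 'g set) topology" where
  "odometer_top \<Gamma> = subtopology (product_topology (\<lambda>n. discrete_topology (cosets (\<Gamma> n))) UNIV)
                                  (odometer \<Gamma>)"

definition almost_1_1_ext_odometer ::
  "('g::group_add \<Rightarrow> 'a::topological_space) set \<Rightarrow> (nat \<Rightarrow> 'g set) \<Rightarrow> bool" where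
  "almost_1_1_ext_odometer X \<Gamma> \<longleftrightarrow>
     (\<exists>\<pi>. continuous_map (top_of_set X) (odometer_top \<Gamma>) \<pi> \<and>
          \<pi> ` X = odometer \<Gamma> \<and>
          (\<forall>g. \<forall>x\<in>X. \<pi> (shift g x) = odometer_act g (\<pi> x)) \<and>
          (\<exists>y\<in>odometer \<Gamma>. \<exists>!x. x \<in> X \<and> \<pi> x = y))"

end

theory Submission
  imports Defs
begin

(*
  Infinite G.  Call a level k strict if Gamma_k differs from Gamma_(k-1); there are infinitely
  many, and level k gets the colour "parity of the number of strict levels up to k".  A point y
  of the odometer whose cosets y_n have empty intersection defines the configuration
  eta_y(h) = colour of the first level n with h outside y_n.  It is a Toeplitz array, because h
  is Gamma_n-periodic for that n.  Outside y_m the configuration eta_y depends only on the coset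
  y_m (its level-m skeleton), and two different cosets at level n have skeletons at the next
  strict level which disagree somewhere.  Hence every element of the orbit closure X of eta_y
  determines a point of the odometer.  This is the factor map; it is equivariant, the shift on X
  is free because the odometer action is, and eta_y is the only preimage of y.

  Regularity.  Pick the point y at random, through independent uniform digits from transversals
  of Gamma_j in Gamma_(j-1): all cosets of Gamma_n are equally likely, so almost surely the y_n
  have empty intersection (this also provides the base point).  The probability of a cylinder
  event for eta_y is the limit, as m grows, of the number of cosets of Gamma_m whose skeleton
  decides the event times the probability of a single coset.  Translation permutes these
  cosets, so the law of eta_y is a shift-invariant measure on X carried by Toeplitz arrays.

  Finite G.  Some Gamma_N is trivial, the odometer is a copy of G, and the orbit of the
  indicator of the identity is the required subshift.
*)

section \<open>Cosets\<close>

lemma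
  assumes "subgrp H"
  shows subgrp_zero: "0 \<in> H"
    and subgrp_add: "a \<in> H \<Longrightarrow> b \<in> H \<Longrightarrow> a + b \<in> H"
    and subgrp_uminus: "a \<in> H \<Longrightarrow> - a \<in> H"
  using assms unfolding subgrp_def by auto

lemma subgrp_uminus_iff: "subgrp H \<Longrightarrow> - a \<in> H \<longleftrightarrow> a \<in> H"
  using subgrp_uminus[of H "- a"] subgrp_uminus[of H a] by auto

lemma mem_lcoset: "x \<in> lcoset a H \<longleftrightarrow> - a + x \<in> H"
proof
  assume "x \<in> lcoset a H"
  then obtain h where "h \<in> H" "x = a + h"
    unfolding lcoset_def by auto
  then show "- a + x \<in> H"
    by (simp add: add.assoc[symmetric])
next
  assume "- a + x \<in> H"
  moreover have "x = a + (- a + x)"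
    by (simp add: add.assoc[symmetric])
  ultimately show "x \<in> lcoset a H"
    unfolding lcoset_def by blast
qed

lemma mem_lcoset_plus: "h \<in> lcoset (g + a) H \<longleftrightarrow> - g + h \<in> lcoset a H"
  by (simp only: mem_lcoset minus_add add.assoc)

lemma self_in_lcoset: "subgrp H \<Longrightarrow> a \<in> lcoset a H"
  by (simp add: mem_lcoset subgrp_zero)

lemma lcoset_eq_iff:
  assumes "subgrp H"
  shows "lcoset a H = lcoset b H \<longleftrightarrow> - a + b \<in> H"
proof
  assume "lcoset a H = lcoset b H"
  then have "b \<in> lcoset a H"
    using self_in_lcoset[OF assms, of b] by (simp only:)
  then show "- a + b \<in> H"
    by (simp only: mem_lcoset)
next
  assume ab: "- a + b \<in> H"
  then have ba: "- b + a \<in> H"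
    using subgrp_uminus[OF assms ab] by (simp add: minus_add)
  have "- a + x = (- a + b) + (- b + x)" "- b + x = (- b + a) + (- a + x)" for x
    by (simp_all add: add.assoc[symmetric])
  then have "- a + x \<in> H \<longleftrightarrow> - b + x \<in> H" for x
    using subgrp_add[OF assms ab, of "- b + x"] subgrp_add[OF assms ba, of "- a + x"] by metis
  then show "lcoset a H = lcoset b H"
    by (auto simp only: mem_lcoset)
qed

lemma lcoset_eq_iff_mem: "subgrp H \<Longrightarrow> lcoset a H = lcoset b H \<longleftrightarrow> b \<in> lcoset a H"
  by (simp add: lcoset_eq_iff mem_lcoset)

lemma lcoset_eqI_common:
  "subgrp H \<Longrightarrow> x \<in> lcoset a H \<Longrightarrow> x \<in> lcoset b H \<Longrightarrow> lcoset a H = lcoset b H"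
  by (metis lcoset_eq_iff_mem)

lemma lcoset_mono: "H \<subseteq> K \<Longrightarrow> lcoset a H \<subseteq> lcoset a K"
  unfolding lcoset_def by auto

lemma plus_image_lcoset: "(\<lambda>h. g + h) ` lcoset a H = lcoset (g + a) H"
  unfolding lcoset_def image_image by (simp add: add.assoc)

lemma mem_cosets: "c \<in> cosets H \<longleftrightarrow> (\<exists>a. c = lcoset a H)"
  unfolding cosets_def by auto

lemma lcoset_in_cosets: "lcoset a H \<in> cosets H"
  unfolding mem_cosets by blast

lemma normal_subgrp_conj:
  assumes "normal_subgrp H" "\<gamma> \<in> H"
  shows "- a + \<gamma> + a \<in> H"
proof -
  have "(- a) + \<gamma> + - (- a) \<in> H"
    using assms unfolding normal_subgrp_def by blast
  then show ?thesis
    by simp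
qed

lemma normal_lcoset_plus_left_iff:
  assumes "normal_subgrp H" "\<gamma> \<in> H"
  shows "\<gamma> + h \<in> lcoset a H \<longleftrightarrow> h \<in> lcoset a H"
proof -
  have H: "subgrp H"
    using assms(1) normal_subgrp_def by blast
  define c where "c = - a + \<gamma> + a"
  have c: "c \<in> H"
    unfolding c_def using normal_subgrp_conj[OF assms] .
  have "- a + (\<gamma> + h) = c + (- a + h)" "- a + h = - c + (- a + (\<gamma> + h))"
    unfolding c_def
    by (simp_all only: add.assoc minus_add minus_minus add_minus_cancel minus_add_cancel)
  then show ?thesis
    unfolding mem_lcoset using subgrp_add[OF H] subgrp_uminus[OF H] c by metis
qed

section \<open>Topology\<close>

lemma closed_coordinate_eq: "closed {f :: 'a \<Rightarrow> bool. f i = v}"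
  by (intro closed_Collect_eq continuous_on_product_coordinates continuous_on_const)

lemma closed_singleton_fun: "closed {x :: 'a \<Rightarrow> bool}"
proof -
  have "{x} = (\<Inter>i. {f :: 'a \<Rightarrow> bool. f i = x i})"
    by auto
  then show ?thesis
    by (simp add: closed_INT closed_coordinate_eq)
qed

lemma finite_imp_closed_fun:
  assumes "finite (F :: ('a \<Rightarrow> bool) set)"
  shows "closed F"
proof -
  have "closed (\<Union>x\<in>F. {x})"
    using assms closed_singleton_fun by (intro closed_UN) auto
  then show ?thesis
    by simp
qed

lemma finite_imp_openin_fun:
  assumes "finite (X :: ('a \<Rightarrow> bool) set)" "S \<subseteq> X"
  shows "openin (top_of_set X) S"
proof -
  have "open (- (X - S))"
    using assms by (intro open_Compl finite_imp_closed_fun) auto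
  moreover have "S = X \<inter> - (X - S)"
    using assms by auto
  ultimately show ?thesis
    by (metis openin_open_Int)
qed

lemma compact_UNIV_fun: "compact (UNIV :: ('a \<Rightarrow> bool) set)"
proof -
  have "compact_space (euclidean :: bool topology)"
    by (simp add: compact_space_def compactin_euclidean_iff finite_imp_compact)
  then have "compact_space (product_topology (\<lambda>_::'a. euclidean :: bool topology) UNIV)"
    using compact_space_product_topology by blast
  then show ?thesis
    by (simp add: euclidean_product_topology compact_space_def compactin_euclidean_iff)
qed

lemma open_contains_cylinder:
  fixes T :: "('a \<Rightarrow> bool) set"
  assumes "open T" "x \<in> T"
  shows "\<exists>F. finite F \<and> {f. \<forall>i\<in>F. f i = x i} \<subseteq> T"
proof -
  have "openin (product_topology (\<lambda>i. euclidean) UNIV) T"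
    using assms(1) by (simp add: open_fun_def)
  then have "\<forall>x\<in>T. \<exists>U. finite {i \<in> UNIV. U i \<noteq> topspace (euclidean :: bool topology)} \<and>
      (\<forall>i \<in> UNIV. openin euclidean (U i)) \<and> x \<in> Pi\<^sub>E UNIV U \<and> Pi\<^sub>E UNIV U \<subseteq> T"
    unfolding openin_product_topology_alt .
  then obtain U where U: "finite {i. U i \<noteq> UNIV}" "x \<in> Pi\<^sub>E UNIV U" "Pi\<^sub>E UNIV U \<subseteq> T"
    using assms(2) by auto
  have "{f. \<forall>i\<in>{i. U i \<noteq> UNIV}. f i = x i} \<subseteq> Pi\<^sub>E UNIV U"
  proof (intro subsetI, elim CollectE)
    fix f assume "\<forall>i\<in>{i. U i \<noteq> UNIV}. f i = x i"
    then have "f i \<in> U i" for i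
      using U(2) by (cases "U i = UNIV") (auto simp: PiE_iff)
    then show "f \<in> Pi\<^sub>E UNIV U"
      by (simp add: PiE_iff)
  qed
  with U(1,3) show ?thesis
    by (intro exI[of _ "{i. U i \<noteq> UNIV}"] conjI) (simp_all only: subset_trans)
qed

lemma in_closure_if_matched_on_finite:
  fixes x :: "'a \<Rightarrow> bool"
  assumes "\<And>F. finite F \<Longrightarrow> \<exists>s\<in>S. \<forall>i\<in>F. s i = x i"
  shows "x \<in> closure S"
  unfolding closure_iff_nhds_not_empty
proof (intro allI impI)
  fix A T assume "T \<subseteq> A" "open T" "x \<in> T"
  then obtain F where "finite F" "{f. \<forall>i\<in>F. f i = x i} \<subseteq> T"
    using open_contains_cylinder by blast
  with assms \<open>T \<subseteq> A\<close> show "S \<inter> A \<noteq> {}"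
    by blast
qed

lemma continuous_shift: "continuous_on UNIV (shift g :: ('g::group_add \<Rightarrow> bool) \<Rightarrow> _)"
  unfolding shift_def
  by (intro continuous_on_coordinatewise_then_product continuous_on_product_coordinates)

lemma shift_shift: "shift g (shift h x) = shift (g + h) x"
  unfolding shift_def by (simp only: minus_add add.assoc)

lemma shift_zero: "shift 0 x = x"
  unfolding shift_def by simp

lemma continuous_map_discrete_topology_fibres:
  assumes "f \<in> topspace T \<rightarrow> U" "\<And>u. u \<in> U \<Longrightarrow> openin T {x\<in>topspace T. f x = u}"
  shows "continuous_map T (discrete_topology U) f"
  unfolding continuous_map_def
proof (intro conjI allI impI)
  show "f \<in> topspace T \<rightarrow> topspace (discrete_topology U)"
    using assms(1) by simp
  fix V assume "openin (discrete_topology U) V"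
  then have "V \<subseteq> U"
    by simp
  then have "openin T (\<Union>u\<in>V. {x\<in>topspace T. f x = u})"
    using assms(2) by (intro openin_Union) blast
  moreover have "{x \<in> topspace T. f x \<in> V} = (\<Union>u\<in>V. {x\<in>topspace T. f x = u})"
    by blast
  ultimately show "openin T {x \<in> topspace T. f x \<in> V}"
    by simp
qed

lemma compact_Int_decreasing_closed:
  fixes C :: "nat \<Rightarrow> 'a::topological_space set"
  assumes "compact K" "\<And>n. closed (C n)" "\<And>n. K \<inter> C n \<noteq> {}"
    and "\<And>m n. m \<le> n \<Longrightarrow> K \<inter> C n \<subseteq> C m"
  shows "K \<inter> \<Inter>(range C) \<noteq> {}"
proof (rule compact_imp_fip[OF assms(1)])
  show "closed T" if "T \<in> range C" for T
    using that assms(2) by blast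
  fix F assume "finite F" "F \<subseteq> range C"
  then obtain I where I: "finite I" "F = C ` I"
    using finite_subset_image by metis
  define N where "N = Max (insert 0 I)"
  have "i \<le> N" if "i \<in> I" for i
    unfolding N_def using I(1) that by simp
  then have "K \<inter> C N \<subseteq> K \<inter> \<Inter>F"
    using assms(4) I(2) by blast
  then show "K \<inter> \<Inter>F \<noteq> {}"
    using assms(3)[of N] by blast
qed

section \<open>The odometer\<close>

locale normal_chain =
  fixes \<Gamma> :: "nat \<Rightarrow> 'g::group_add set"
  assumes normal_Gamma: "\<And>n. normal_subgrp (\<Gamma> n)"
    and finite_index_Gamma: "\<And>n. finite_index (\<Gamma> n)"
    and Gamma_Suc_subset: "\<And>n. \<Gamma> (Suc n) \<subseteq> \<Gamma> n"
    and Inter_Gamma: "(\<Inter>n. \<Gamma> n) = {0}"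
begin

lemma subgrp_Gamma: "subgrp (\<Gamma> n)"
  using normal_Gamma normal_subgrp_def by blast

lemma Gamma_antimono: "m \<le> n \<Longrightarrow> \<Gamma> n \<subseteq> \<Gamma> m"
  using lift_Suc_antimono_le[of \<Gamma>] Gamma_Suc_subset by blast

lemma finite_cosets_Gamma: "finite (cosets (\<Gamma> n))"
  using finite_index_Gamma finite_index_def by blast

lemma lcoset_Gamma_antimono: "m \<le> n \<Longrightarrow> lcoset a (\<Gamma> n) \<subseteq> lcoset a (\<Gamma> m)"
  by (rule lcoset_mono[OF Gamma_antimono])

lemma lcoset_Gamma_eq_coarsen:
  "m \<le> n \<Longrightarrow> lcoset a (\<Gamma> n) = lcoset b (\<Gamma> n) \<Longrightarrow> lcoset a (\<Gamma> m) = lcoset b (\<Gamma> m)"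
  using Gamma_antimono lcoset_eq_iff[OF subgrp_Gamma] by blast

lemma odometerI:
  assumes "\<And>n. y n = lcoset (a n) (\<Gamma> n)"
    and "\<And>n. lcoset (a (Suc n)) (\<Gamma> n) = lcoset (a n) (\<Gamma> n)"
  shows "y \<in> odometer \<Gamma>"
  unfolding odometer_def
proof (intro CollectI conjI allI impI)
  show "y n \<in> cosets (\<Gamma> n)" for n
    using assms(1) lcoset_in_cosets by simp
  fix n g assume "y (Suc n) = lcoset g (\<Gamma> (Suc n))"
  then have "lcoset (a (Suc n)) (\<Gamma> (Suc n)) = lcoset g (\<Gamma> (Suc n))"
    by (simp only: assms(1))
  then have "lcoset (a (Suc n)) (\<Gamma> n) = lcoset g (\<Gamma> n)"
    by (rule lcoset_Gamma_eq_coarsen[rotated]) simp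
  then show "y n = lcoset g (\<Gamma> n)"
    by (simp only: assms)
qed

lemma odometer_lcoset: "y \<in> odometer \<Gamma> \<Longrightarrow> \<exists>a. y n = lcoset a (\<Gamma> n)"
  unfolding odometer_def mem_cosets by blast

lemma odometer_lcoset_down:
  assumes "y \<in> odometer \<Gamma>" "y m = lcoset a (\<Gamma> m)" "k \<le> m"
  shows "y k = lcoset a (\<Gamma> k)"
  using assms(3,2)
proof (induction rule: inc_induct)
  case (step n)
  then show ?case
    using assms(1) unfolding odometer_def by blast
qed

lemma odometer_antimono:
  assumes "y \<in> odometer \<Gamma>" "k \<le> m"
  shows "y m \<subseteq> y k"
proof -
  obtain a where a: "y m = lcoset a (\<Gamma> m)"
    using odometer_lcoset[OF assms(1)] by blast
  show ?thesis
    using odometer_lcoset_down[OF assms(1) a assms(2)] lcoset_Gamma_antimono[OF assms(2)] a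
    by simp
qed

lemma odometer_eq_down:
  assumes "y \<in> odometer \<Gamma>" "y' \<in> odometer \<Gamma>" "y m = y' m" "k \<le> m"
  shows "y k = y' k"
proof -
  obtain a where a: "y m = lcoset a (\<Gamma> m)"
    using odometer_lcoset[OF assms(1)] by blast
  show ?thesis
    using odometer_lcoset_down[OF assms(1) a assms(4)] odometer_lcoset_down[OF assms(2) _ assms(4)]
      a assms(3) by simp
qed

lemma odometer_act_lcoset:
  "y n = lcoset a (\<Gamma> n) \<Longrightarrow> odometer_act g y n = lcoset (g + a) (\<Gamma> n)"
  unfolding odometer_act_def by (simp add: plus_image_lcoset)

lemma odometer_act_in_odometer:
  assumes "y \<in> odometer \<Gamma>"
  shows "odometer_act g y \<in> odometer \<Gamma>"
proof -
  obtain a where a: "y n = lcoset (a n) (\<Gamma> n)" for n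
    using odometer_lcoset[OF assms] by metis
  show ?thesis
  proof (rule odometerI)
    show "odometer_act g y n = lcoset (g + a n) (\<Gamma> n)" for n
      by (rule odometer_act_lcoset[of y n "a n", OF a])
    have "lcoset (a (Suc n)) (\<Gamma> n) = lcoset (a n) (\<Gamma> n)" for n
      using odometer_lcoset_down[OF assms a[of "Suc n"], of n] a[of n] by simp
    then show "lcoset (g + a (Suc n)) (\<Gamma> n) = lcoset (g + a n) (\<Gamma> n)" for n
      by (simp flip: plus_image_lcoset)
  qed
qed

lemma odometer_act_free:
  assumes "y \<in> odometer \<Gamma>" "odometer_act g y = y"
  shows "g = 0"
proof -
  have "g \<in> \<Gamma> n" for n
  proof -
    obtain a where a: "y n = lcoset a (\<Gamma> n)"
      using odometer_lcoset[OF assms(1)] by blast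
    then have "lcoset (g + a) (\<Gamma> n) = lcoset a (\<Gamma> n)"
      using odometer_act_lcoset[of y n a g] a assms(2) by simp
    then have "- a + - g + a \<in> \<Gamma> n"
      using lcoset_eq_iff[OF subgrp_Gamma] by (simp add: minus_add)
    then have "- (- a) + (- a + - g + a) + - a \<in> \<Gamma> n"
      using normal_subgrp_conj[OF normal_Gamma] by blast
    then have "- g \<in> \<Gamma> n"
      by (simp only: minus_minus add.assoc add_minus_cancel right_minus add_0_right)
    then show ?thesis
      using subgrp_uminus_iff[OF subgrp_Gamma] by blast
  qed
  then show ?thesis
    using Inter_Gamma by blast
qed

lemma lcoset_seq_in_odometer: "(\<lambda>n. lcoset a (\<Gamma> n)) \<in> odometer \<Gamma>"
  by (rule odometerI[where a = "\<lambda>_. a"]) simp_all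

lemma odometer_level_avoiding:
  assumes "y \<in> odometer \<Gamma>" "(\<Inter>n. y n) = {}" "finite F"
  obtains m where "\<forall>h\<in>F. h \<notin> y m"
proof -
  have "\<forall>h\<in>F. \<exists>k. h \<notin> y k"
    using assms(2) by (simp add: set_eq_iff)
  then obtain k where k: "\<And>h. h \<in> F \<Longrightarrow> h \<notin> y (k h)"
    by metis
  define m where "m = Max (insert 0 (k ` F))"
  have "h \<notin> y m" if "h \<in> F" for h
    using odometer_antimono[OF assms(1), of "k h" m] k[OF that] assms(3) that
    unfolding m_def by auto
  then show thesis
    using that by blast
qed

lemma toeplitz_arrayI_Gamma:
  assumes "\<And>h. \<exists>k. \<forall>\<gamma>\<in>\<Gamma> k. x (\<gamma> + h) = x h"
  shows "toeplitz_array x"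
  unfolding toeplitz_array_def
proof
  fix h
  obtain k where "\<forall>\<gamma>\<in>\<Gamma> k. x (\<gamma> + h) = x h"
    using assms by blast
  then have "h \<in> Per x (\<Gamma> k)"
    unfolding Per_def Per_val_def by blast
  then show "\<exists>\<Gamma>'. finite_index \<Gamma>' \<and> h \<in> Per x \<Gamma>'"
    using finite_index_Gamma by blast
qed

end

section \<open>Parity colourings of the odometer\<close>

lemma Least_eq_if_agree_upto:
  fixes P Q :: "nat \<Rightarrow> bool"
  assumes agree: "\<And>k. k \<le> m \<Longrightarrow> P k \<longleftrightarrow> Q k" and "P m"
  shows "(LEAST k. P k) = (LEAST k. Q k)"
proof -
  have "Q m"
    using assms by simp
  have P_le: "(LEAST k. P k) \<le> m" and Q_le: "(LEAST k. Q k) \<le> m"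
    using \<open>P m\<close> \<open>Q m\<close> by (auto intro: Least_le)
  have "Q (LEAST k. P k)"
    using agree[OF P_le] LeastI[of P, OF \<open>P m\<close>] by simp
  moreover have "P (LEAST k. Q k)"
    using agree[OF Q_le] LeastI[of Q, OF \<open>Q m\<close>] by simp
  ultimately show ?thesis
    by (simp add: Least_le antisym)
qed

locale infinite_normal_chain = normal_chain \<Gamma> for \<Gamma> :: "nat \<Rightarrow> 'g::{group_add,countable} set" +
  assumes infinite_UNIV: "infinite (UNIV :: 'g set)"
begin

definition strict_level :: "nat \<Rightarrow> bool" where
  "strict_level k \<longleftrightarrow> 0 < k \<and> \<Gamma> k \<noteq> \<Gamma> (k - 1)"

lemma strict_level_unbounded: "\<exists>k>n. strict_level k"
proof (rule ccontr)
  assume none: "\<not> (\<exists>k>n. strict_level k)"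
  have step: "\<Gamma> (Suc k) = \<Gamma> k" if "n \<le> k" for k
  proof -
    have "\<not> strict_level (Suc k)"
      using none that by simp
    then show ?thesis
      unfolding strict_level_def by simp
  qed
  have stable: "\<Gamma> k = \<Gamma> n" if "n \<le> k" for k
    using that by (induction rule: dec_induct) (simp_all add: step)
  have "\<Gamma> n \<subseteq> \<Gamma> k" for k
  proof (cases "k \<le> n")
    case True
    then show ?thesis
      by (rule Gamma_antimono)
  next
    case False
    then show ?thesis
      using stable[of k] by simp
  qed
  then have "\<Gamma> n \<subseteq> {0}"
    unfolding Inter_Gamma[symmetric] by (rule INF_greatest)
  then have "\<Gamma> n = {0}"
    using subgrp_zero[OF subgrp_Gamma, of n] by auto
  moreover have "cosets {0::'g} = (\<lambda>g. {g}) ` UNIV"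
    unfolding cosets_def lcoset_def by auto
  ultimately have "finite ((\<lambda>g::'g. {g}) ` UNIV)"
    using finite_cosets_Gamma[of n] by simp
  then have "finite (UNIV :: 'g set)"
    by (rule finite_imageD) (simp add: inj_on_def)
  then show False
    using infinite_UNIV by simp
qed

definition next_strict :: "nat \<Rightarrow> nat" where
  "next_strict n = (LEAST k. n < k \<and> strict_level k)"

lemma
  shows next_strict_gt: "n < next_strict n"
    and strict_level_next_strict: "strict_level (next_strict n)"
  using LeastI_ex[OF strict_level_unbounded[of n]] unfolding next_strict_def by auto

lemma next_strict_le: "n < k \<Longrightarrow> strict_level k \<Longrightarrow> next_strict n \<le> k"
  unfolding next_strict_def by (simp add: Least_le)

lemma next_strict_mono: "j \<le> n \<Longrightarrow> next_strict j \<le> next_strict n"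
  using next_strict_le[of j "next_strict n"] next_strict_gt[of n] strict_level_next_strict[of n]
  by simp

definition level_colour :: "nat \<Rightarrow> bool" where
  "level_colour k = odd (card {i. i \<le> k \<and> strict_level i})"

lemma level_colour_next_strict: "level_colour (next_strict j) \<noteq> level_colour j"
proof -
  let ?S = "\<lambda>k. {i. i \<le> k \<and> strict_level i}"
  have "i \<le> j" if "i < next_strict j" "strict_level i" for i
  proof (rule ccontr)
    assume "\<not> i \<le> j"
    then have "next_strict j \<le> i"
      using next_strict_le that(2) by simp
    then show False
      using that(1) by simp
  qed
  then have "?S (next_strict j) = insert (next_strict j) (?S j)"
    using next_strict_gt[of j] strict_level_next_strict[of j] by fastforce
  moreover have "finite (?S j)"
    by (rule finite_subset[of _ "{..j}"]) auto
  moreover have "next_strict j \<notin> ?S j"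
    using next_strict_gt[of j] by simp
  ultimately show ?thesis
    unfolding level_colour_def by simp
qed

text \<open>\<^term>\<open>exit_level a a\<close> is a junk value; \<^term>\<open>exit_level a h\<close> is only used for
  \<^term>\<open>h\<close> outside some coset of \<^term>\<open>a\<close>.\<close>

definition exit_level :: "'g \<Rightarrow> 'g \<Rightarrow> nat" where
  "exit_level a h = (LEAST k. h \<notin> lcoset a (\<Gamma> k))"

definition skeleton :: "nat \<Rightarrow> 'g \<Rightarrow> ('g \<Rightarrow> bool) set" where
  "skeleton m a = {x. \<forall>h. h \<notin> lcoset a (\<Gamma> m) \<longrightarrow> x h = level_colour (exit_level a h)}"

lemma exit_level_eqI:
  assumes "h \<notin> lcoset a (\<Gamma> k)" "\<And>i. i < k \<Longrightarrow> h \<in> lcoset a (\<Gamma> i)"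
  shows "exit_level a h = k"
  unfolding exit_level_def
proof (rule Least_equality)
  show "h \<notin> lcoset a (\<Gamma> k)"
    by (rule assms(1))
  show "k \<le> i" if "h \<notin> lcoset a (\<Gamma> i)" for i
    using assms(2) that not_le by blast
qed

lemma exists_exit_at_strict_level:
  assumes "strict_level k"
  obtains h where "h \<notin> lcoset b (\<Gamma> k)" "\<And>i. i < k \<Longrightarrow> h \<in> lcoset b (\<Gamma> i)"
proof -
  obtain \<gamma> where \<gamma>: "\<gamma> \<in> \<Gamma> (k - 1)" "\<gamma> \<notin> \<Gamma> k"
    using assms Gamma_antimono[of "k - 1" k] unfolding strict_level_def by auto
  have b\<gamma>: "- b + (b + \<gamma>) = \<gamma>"
    by (simp add: add.assoc[symmetric])
  show thesis
  proof (rule that[of "b + \<gamma>"])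
    show "b + \<gamma> \<notin> lcoset b (\<Gamma> k)"
      using \<gamma>(2) b\<gamma> by (simp add: mem_lcoset)
    fix i assume "i < k"
    then have "\<Gamma> (k - 1) \<subseteq> \<Gamma> i"
      by (intro Gamma_antimono) simp
    then show "b + \<gamma> \<in> lcoset b (\<Gamma> i)"
      using \<gamma>(1) b\<gamma> by (auto simp: mem_lcoset)
  qed
qed

lemma skeletons_disagree:
  assumes "lcoset a (\<Gamma> n) \<noteq> lcoset b (\<Gamma> n)"
  shows "\<exists>h. h \<notin> lcoset a (\<Gamma> (next_strict n)) \<and> h \<notin> lcoset b (\<Gamma> (next_strict n)) \<and>
    level_colour (exit_level a h) \<noteq> level_colour (exit_level b h)"
proof -
  define j where "j = (LEAST k. lcoset a (\<Gamma> k) \<noteq> lcoset b (\<Gamma> k))"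
  have j: "lcoset a (\<Gamma> j) \<noteq> lcoset b (\<Gamma> j)" "j \<le> n"
    unfolding j_def by (rule LeastI[of _ n], rule assms) (rule Least_le, rule assms)
  have below_j: "lcoset a (\<Gamma> i) = lcoset b (\<Gamma> i)" if "i < j" for i
    using that unfolding j_def by (rule not_less_Least[THEN notnotD])
  define k where "k = next_strict j"
  have k: "j < k" "k \<le> next_strict n"
    unfolding k_def using next_strict_gt next_strict_mono[OF j(2)] by auto
  have "strict_level k"
    unfolding k_def by (rule strict_level_next_strict)
  text \<open>A point leaving the cosets of \<^term>\<open>b\<close> exactly at the strict level \<^term>\<open>k\<close>
    leaves those of \<^term>\<open>a\<close> exactly at level \<^term>\<open>j\<close>, and these two levels have different
    colours.\<close>
  then obtain h where h_b: "h \<notin> lcoset b (\<Gamma> k)" "\<And>i. i < k \<Longrightarrow> h \<in> lcoset b (\<Gamma> i)"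
    using exists_exit_at_strict_level[where b = b] by blast
  have h_a: "h \<notin> lcoset a (\<Gamma> j)"
    using lcoset_eqI_common[OF subgrp_Gamma _ h_b(2)[OF k(1)]] j(1) by metis
  have "exit_level a h = j"
    using h_a h_b(2) below_j k(1) by (intro exit_level_eqI) auto
  moreover have "exit_level b h = k"
    using h_b by (rule exit_level_eqI)
  moreover have "h \<notin> lcoset b (\<Gamma> (next_strict n))"
    using h_b(1) lcoset_Gamma_antimono[OF k(2)] by blast
  moreover have "h \<notin> lcoset a (\<Gamma> (next_strict n))"
    using h_a lcoset_Gamma_antimono[of j "next_strict n"] j(2) next_strict_gt[of n] by auto
  ultimately show ?thesis
    using level_colour_next_strict[of j] unfolding k_def by metis
qed

lemma lcoset_eq_if_in_skeletons:
  "x \<in> skeleton (next_strict n) a \<Longrightarrow> x \<in> skeleton (next_strict n) b \<Longrightarrow>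
    lcoset a (\<Gamma> n) = lcoset b (\<Gamma> n)"
  using skeletons_disagree unfolding skeleton_def by blast

lemma skeleton_antimono: "m' \<le> m \<Longrightarrow> skeleton m a \<subseteq> skeleton m' a"
  unfolding skeleton_def using lcoset_Gamma_antimono by blast

lemma exit_level_cong:
  assumes "lcoset a (\<Gamma> m) = lcoset b (\<Gamma> m)" "h \<notin> lcoset a (\<Gamma> m)"
  shows "exit_level a h = exit_level b h"
  unfolding exit_level_def
proof (rule Least_eq_if_agree_upto)
  show "h \<notin> lcoset a (\<Gamma> k) \<longleftrightarrow> h \<notin> lcoset b (\<Gamma> k)" if "k \<le> m" for k
    using lcoset_Gamma_eq_coarsen[OF that assms(1)] by simp
qed (rule assms(2))

lemma skeleton_cong: "lcoset a (\<Gamma> m) = lcoset b (\<Gamma> m) \<Longrightarrow> skeleton m a = skeleton m b"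
  unfolding skeleton_def using exit_level_cong by (metis (no_types, opaque_lifting))

lemma exit_level_plus: "exit_level (g + a) h = exit_level a (- g + h)"
  unfolding exit_level_def by (simp add: mem_lcoset_plus)

lemma shift_in_skeleton: "x \<in> skeleton m a \<Longrightarrow> shift g x \<in> skeleton m (g + a)"
  unfolding skeleton_def shift_def by (simp add: mem_lcoset_plus exit_level_plus)

lemma closed_skeleton: "closed (skeleton m a)"
proof -
  have "skeleton m a = (\<Inter>h\<in>- lcoset a (\<Gamma> m). {x. x h = level_colour (exit_level a h)})"
    unfolding skeleton_def by blast
  then show ?thesis
    by (simp add: closed_INT closed_coordinate_eq)
qed

lemma finite_range_skeleton: "finite (range (skeleton m))"
proof -
  have "skeleton m a = skeleton m (some_elem (lcoset a (\<Gamma> m)))" for a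
  proof (rule skeleton_cong)
    have "some_elem (lcoset a (\<Gamma> m)) \<in> lcoset a (\<Gamma> m)"
      using self_in_lcoset[OF subgrp_Gamma] by (intro some_elem_nonempty) blast
    then show "lcoset a (\<Gamma> m) = lcoset (some_elem (lcoset a (\<Gamma> m))) (\<Gamma> m)"
      by (simp add: lcoset_eq_iff_mem[OF subgrp_Gamma])
  qed
  then have "range (skeleton m) \<subseteq> (\<lambda>c. skeleton m (some_elem c)) ` cosets (\<Gamma> m)"
    using lcoset_in_cosets by blast
  then show ?thesis
    using finite_cosets_Gamma finite_surj by blast
qed

lemma closed_UN_skeleton: "closed (\<Union>a\<in>A. skeleton m a)"
proof (rule closed_Union)
  show "finite (skeleton m ` A)"
    by (rule finite_subset[OF _ finite_range_skeleton]) blast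
qed (auto simp: closed_skeleton)

definition colouring :: "(nat \<Rightarrow> 'g set) \<Rightarrow> 'g \<Rightarrow> bool" where
  "colouring y h = level_colour (LEAST k. h \<notin> y k)"

lemma colouring_in_skeleton:
  assumes "y \<in> odometer \<Gamma>" "y m = lcoset a (\<Gamma> m)"
  shows "colouring y \<in> skeleton m a"
  unfolding skeleton_def
proof (intro CollectI allI impI)
  fix h assume h: "h \<notin> lcoset a (\<Gamma> m)"
  have "(LEAST k. h \<notin> y k) = exit_level a h"
    unfolding exit_level_def
  proof (rule Least_eq_if_agree_upto)
    show "h \<notin> y k \<longleftrightarrow> h \<notin> lcoset a (\<Gamma> k)" if "k \<le> m" for k
      using odometer_lcoset_down[OF assms that] by simp
    show "h \<notin> y m"
      using h assms(2) by simp
  qed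
  then show "colouring y h = level_colour (exit_level a h)"
    unfolding colouring_def by simp
qed

lemma shift_colouring: "shift g (colouring y) = colouring (odometer_act g y)"
proof -
  have "h \<in> (+) g ` S \<longleftrightarrow> - g + h \<in> S" for h and S :: "'g set"
    by (auto simp: image_iff add.assoc[symmetric]) (metis add_minus_cancel)
  then show ?thesis
    unfolding shift_def colouring_def odometer_act_def by (auto intro!: ext)
qed

lemma colouring_periodic:
  assumes "y \<in> odometer \<Gamma>" "(\<Inter>n. y n) = {}"
  shows "\<exists>k. \<forall>\<gamma>\<in>\<Gamma> k. colouring y (\<gamma> + h) = colouring y h"
proof -
  define k where "k = (LEAST k. h \<notin> y k)"
  have "\<exists>k. h \<notin> y k"
    using assms(2) by (simp add: set_eq_iff)
  then have "h \<notin> y k"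
    unfolding k_def by (rule LeastI_ex)
  have "colouring y (\<gamma> + h) = colouring y h" if \<gamma>: "\<gamma> \<in> \<Gamma> k" for \<gamma>
  proof -
    have agree: "\<gamma> + h \<notin> y j \<longleftrightarrow> h \<notin> y j" if "j \<le> k" for j
    proof -
      obtain a where "y j = lcoset a (\<Gamma> j)"
        using odometer_lcoset[OF assms(1)] by blast
      moreover have "\<gamma> \<in> \<Gamma> j"
        using \<gamma> Gamma_antimono[OF that] by blast
      ultimately show ?thesis
        using normal_lcoset_plus_left_iff[OF normal_Gamma] by simp
    qed
    have "(LEAST j. \<gamma> + h \<notin> y j) = k"
      unfolding k_def
    proof (rule Least_eq_if_agree_upto)
      show "\<gamma> + h \<notin> y k"
        using agree[of k] \<open>h \<notin> y k\<close> by simp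
    qed (use agree in simp)
    then show ?thesis
      unfolding colouring_def k_def by simp
  qed
  then show ?thesis
    by blast
qed

lemma toeplitz_array_colouring:
  "y \<in> odometer \<Gamma> \<Longrightarrow> (\<Inter>n. y n) = {} \<Longrightarrow> toeplitz_array (colouring y)"
  using colouring_periodic by (intro toeplitz_arrayI_Gamma) blast

definition factor :: "('g \<Rightarrow> bool) \<Rightarrow> nat \<Rightarrow> 'g set" where
  "factor x n = (THE c. \<exists>a. c = lcoset a (\<Gamma> n) \<and> x \<in> skeleton (next_strict n) a)"

lemma factor_eq: "x \<in> skeleton (next_strict n) a \<Longrightarrow> factor x n = lcoset a (\<Gamma> n)"
  unfolding factor_def using lcoset_eq_if_in_skeletons by (intro the_equality) blast+

lemma factor_colouring:
  assumes "y \<in> odometer \<Gamma>"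
  shows "factor (colouring y) = y"
proof
  fix n
  obtain a where a: "y (next_strict n) = lcoset a (\<Gamma> (next_strict n))"
    using odometer_lcoset[OF assms] by blast
  then have "factor (colouring y) n = lcoset a (\<Gamma> n)"
    using factor_eq colouring_in_skeleton[OF assms] by blast
  also have "\<dots> = y n"
    using odometer_lcoset_down[OF assms a] next_strict_gt[of n] by simp
  finally show "factor (colouring y) n = y n" .
qed

end

section \<open>The Toeplitz subshift\<close>

locale toeplitz_construction = infinite_normal_chain \<Gamma> for \<Gamma> :: "nat \<Rightarrow> 'g::{group_add,countable} set" +
  fixes y0 :: "nat \<Rightarrow> 'g set"
  assumes y0_in_odometer: "y0 \<in> odometer \<Gamma>"
    and Inter_y0: "(\<Inter>n. y0 n) = {}"
begin

definition eta :: "'g \<Rightarrow> bool" where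
  "eta = colouring y0"

definition subshift :: "('g \<Rightarrow> bool) set" where
  "subshift = orbit_closure eta"

lemma subshift_eq: "subshift = closure (range (\<lambda>g. shift g eta))"
  unfolding subshift_def orbit_closure_def ..

lemma closed_subshift: "closed subshift"
  unfolding subshift_eq by simp

lemma compact_subshift: "compact subshift"
  using compact_Int_closed[OF compact_UNIV_fun closed_subshift] by simp

lemma shift_eta_in_subshift: "shift g eta \<in> subshift"
  unfolding subshift_eq by (rule closure_subset[THEN subsetD]) (rule rangeI)

lemma shift_eta_in_skeleton:
  assumes "y0 m = lcoset a (\<Gamma> m)"
  shows "shift g eta \<in> skeleton m (g + a)"
  unfolding eta_def shift_colouring
  by (rule colouring_in_skeleton[OF odometer_act_in_odometer[OF y0_in_odometer]
        odometer_act_lcoset[of y0 m a g, OF assms]])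

lemma subshift_in_skeleton:
  assumes "x \<in> subshift"
  shows "\<exists>a. x \<in> skeleton m a"
proof -
  obtain a0 where "y0 m = lcoset a0 (\<Gamma> m)"
    using odometer_lcoset[OF y0_in_odometer] by blast
  then have "range (\<lambda>g. shift g eta) \<subseteq> (\<Union>a. skeleton m a)"
    using shift_eta_in_skeleton by blast
  then have "subshift \<subseteq> (\<Union>a. skeleton m a)"
    unfolding subshift_eq by (rule closure_minimal) (rule closed_UN_skeleton)
  then show ?thesis
    using assms by blast
qed

lemma factor_subshift:
  assumes "x \<in> subshift"
  obtains a where "x \<in> skeleton (next_strict n) a" "factor x n = lcoset a (\<Gamma> n)"
proof -
  obtain a where "x \<in> skeleton (next_strict n) a"
    using subshift_in_skeleton[OF assms] by blast
  then show thesis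
    using that factor_eq by blast
qed

lemma factor_mem_iff_UN_skeleton:
  assumes "x \<in> subshift"
  shows "factor x n \<in> C \<longleftrightarrow> x \<in> (\<Union>a\<in>{a. lcoset a (\<Gamma> n) \<in> C}. skeleton (next_strict n) a)"
proof
  assume "factor x n \<in> C"
  moreover obtain a where "x \<in> skeleton (next_strict n) a" "factor x n = lcoset a (\<Gamma> n)"
    using factor_subshift[OF assms] .
  ultimately show "x \<in> (\<Union>a\<in>{a. lcoset a (\<Gamma> n) \<in> C}. skeleton (next_strict n) a)"
    by auto
next
  assume "x \<in> (\<Union>a\<in>{a. lcoset a (\<Gamma> n) \<in> C}. skeleton (next_strict n) a)"
  then obtain a where "lcoset a (\<Gamma> n) \<in> C" "x \<in> skeleton (next_strict n) a"
    by blast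
  then show "factor x n \<in> C"
    using factor_eq by simp
qed

lemma factor_in_odometer:
  assumes "x \<in> subshift"
  shows "factor x \<in> odometer \<Gamma>"
proof -
  have "\<exists>a. x \<in> skeleton (next_strict n) a \<and> factor x n = lcoset a (\<Gamma> n)" for n
    using factor_subshift[OF assms] by metis
  then obtain a where a: "x \<in> skeleton (next_strict n) (a n)" "factor x n = lcoset (a n) (\<Gamma> n)" for n
    by metis
  show ?thesis
  proof (rule odometerI)
    show "factor x n = lcoset (a n) (\<Gamma> n)" for n
      by (rule a(2))
    have "x \<in> skeleton (next_strict n) (a (Suc n))" for n
      using a(1)[of "Suc n"] skeleton_antimono[OF next_strict_mono[of n "Suc n"]] by auto
    then show "lcoset (a (Suc n)) (\<Gamma> n) = lcoset (a n) (\<Gamma> n)" for n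
      using a(1) lcoset_eq_if_in_skeletons by blast
  qed
qed

lemma factor_shift:
  assumes "x \<in> subshift"
  shows "factor (shift g x) = odometer_act g (factor x)"
proof
  fix n
  obtain a where a: "x \<in> skeleton (next_strict n) a" "factor x n = lcoset a (\<Gamma> n)"
    using factor_subshift[OF assms] by blast
  then have "factor (shift g x) n = lcoset (g + a) (\<Gamma> n)"
    using factor_eq shift_in_skeleton by blast
  then show "factor (shift g x) n = odometer_act g (factor x) n"
    using odometer_act_lcoset[of "factor x" n a g] a(2) by simp
qed

lemma orbit_eta_meets_skeleton: "\<exists>g. shift g eta \<in> skeleton m a"
proof -
  obtain a0 where a0: "y0 m = lcoset a0 (\<Gamma> m)"
    using odometer_lcoset[OF y0_in_odometer] by blast
  have "(a + - a0) + a0 = a"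
    by (simp add: add.assoc)
  then show ?thesis
    using shift_eta_in_skeleton[OF a0, of "a + - a0"] by metis
qed

lemma colouring_in_subshift:
  assumes y: "y \<in> odometer \<Gamma>" "(\<Inter>n. y n) = {}"
  shows "colouring y \<in> subshift"
  unfolding subshift_eq
proof (rule in_closure_if_matched_on_finite)
  fix F :: "'g set" assume "finite F"
  then obtain m where outside: "\<forall>h\<in>F. h \<notin> y m"
    using odometer_level_avoiding[OF y] by blast
  obtain a where a: "y m = lcoset a (\<Gamma> m)"
    using odometer_lcoset[OF y(1)] by blast
  text \<open>A translate of \<^term>\<open>eta\<close> carries the same level-\<^term>\<open>m\<close> skeleton as
    \<^term>\<open>colouring y\<close>, and this skeleton fixes all values on \<^term>\<open>F\<close>.\<close>
  obtain g where "shift g eta \<in> skeleton m a"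
    using orbit_eta_meets_skeleton by blast
  moreover have "colouring y \<in> skeleton m a"
    by (rule colouring_in_skeleton[OF y(1) a])
  ultimately have "\<forall>h\<in>F. shift g eta h = colouring y h"
    using outside a unfolding skeleton_def by auto
  then show "\<exists>s\<in>range (\<lambda>g. shift g eta). \<forall>h\<in>F. s h = colouring y h"
    by blast
qed

lemma eta_in_subshift: "eta \<in> subshift"
  unfolding eta_def by (rule colouring_in_subshift[OF y0_in_odometer Inter_y0])

lemma factor_eta: "factor eta = y0"
  unfolding eta_def by (rule factor_colouring[OF y0_in_odometer])

lemma shift_in_subshift:
  assumes "x \<in> subshift"
  shows "shift g x \<in> subshift"
proof -
  have "shift g ` closure (range (\<lambda>h. shift h eta)) \<subseteq> subshift"
  proof (rule image_closure_subset)
    show "continuous_on (closure (range (\<lambda>h. shift h eta))) (shift g)"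
      using continuous_shift continuous_on_subset by blast
    show "shift g ` range (\<lambda>h. shift h eta) \<subseteq> subshift"
      using shift_eta_in_subshift by (auto simp: shift_shift)
  qed (rule closed_subshift)
  then show ?thesis
    using assms unfolding subshift_eq by blast
qed

lemma free_shift_subshift: "free_shift subshift"
  unfolding free_shift_def
proof (intro ballI allI impI)
  fix x g assume x: "x \<in> subshift" and "shift g x = x"
  then have "odometer_act g (factor x) = factor x"
    using factor_shift[OF x, of g] by simp
  then show "g = 0"
    using odometer_act_free factor_in_odometer[OF x] by blast
qed

lemma continuous_map_factor: "continuous_map (top_of_set subshift) (odometer_top \<Gamma>) factor"
  unfolding odometer_top_def continuous_map_in_subtopology continuous_map_componentwise_UNIV
proof (intro conjI allI)
  show "factor \<in> topspace (top_of_set subshift) \<rightarrow> odometer \<Gamma>"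
    using factor_in_odometer by (simp add: Pi_iff)
  fix n
  show "continuous_map (top_of_set subshift) (discrete_topology (cosets (\<Gamma> n))) (\<lambda>x. factor x n)"
  proof (rule continuous_map_discrete_topology_fibres)
    show "(\<lambda>x. factor x n) \<in> topspace (top_of_set subshift) \<rightarrow> cosets (\<Gamma> n)"
    proof
      fix x assume "x \<in> topspace (top_of_set subshift)"
      then have "factor x \<in> odometer \<Gamma>"
        by (simp add: factor_in_odometer)
      then show "factor x n \<in> cosets (\<Gamma> n)"
        unfolding odometer_def by blast
    qed
    fix c
    let ?U = "\<Union>a\<in>{a. lcoset a (\<Gamma> n) \<in> - {c}}. skeleton (next_strict n) a"
    have "factor x n = c \<longleftrightarrow> x \<notin> ?U" if "x \<in> subshift" for x
      using factor_mem_iff_UN_skeleton[OF that, of n "- {c}"] by blast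
    then have "{x \<in> subshift. factor x n = c} = {x \<in> subshift. x \<notin> ?U}"
      by (intro Collect_cong) blast
    then have "{x \<in> topspace (top_of_set subshift). factor x n = c} = subshift \<inter> - ?U"
      by (simp only: topspace_euclidean_subtopology) blast
    moreover have "open (- ?U)"
      by (rule open_Compl[OF closed_UN_skeleton])
    ultimately show "openin (top_of_set subshift) {x \<in> topspace (top_of_set subshift). factor x n = c}"
      by (simp add: openin_open_Int)
  qed
qed

lemma factor_image: "factor ` subshift = odometer \<Gamma>"
proof
  show "factor ` subshift \<subseteq> odometer \<Gamma>"
    using factor_in_odometer by blast
  show "odometer \<Gamma> \<subseteq> factor ` subshift"
  proof
    fix y assume y: "y \<in> odometer \<Gamma>"
    define C where "C n = (\<Union>a\<in>{a. lcoset a (\<Gamma> n) \<in> {y n}}. skeleton (next_strict n) a)" for n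
    have C: "x \<in> C n \<longleftrightarrow> factor x n = y n" if "x \<in> subshift" for x n
      unfolding C_def using factor_mem_iff_UN_skeleton[OF that, of n "{y n}"] by simp
    have "subshift \<inter> \<Inter>(range C) \<noteq> {}"
    proof (rule compact_Int_decreasing_closed[OF compact_subshift])
      show "closed (C n)" for n
        unfolding C_def by (rule closed_UN_skeleton)
      show "subshift \<inter> C N \<noteq> {}" for N
      proof -
        obtain a where a: "y (next_strict N) = lcoset a (\<Gamma> (next_strict N))"
          using odometer_lcoset[OF y] by blast
        then have "y N = lcoset a (\<Gamma> N)"
          using odometer_lcoset_down[OF y a, of N] next_strict_gt[of N] by simp
        moreover obtain g where "shift g eta \<in> skeleton (next_strict N) a"
          using orbit_eta_meets_skeleton by blast
        ultimately have "factor (shift g eta) N = y N"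
          using factor_eq by simp
        then show ?thesis
          using C shift_eta_in_subshift by blast
      qed
      show "subshift \<inter> C N \<subseteq> C n" if "n \<le> N" for n N
        using C odometer_eq_down[OF factor_in_odometer y _ that] by blast
    qed
    then obtain x where "x \<in> subshift" "\<And>n. x \<in> C n"
      by blast
    then have "factor x = y"
      using C by blast
    with \<open>x \<in> subshift\<close> show "y \<in> factor ` subshift"
      by blast
  qed
qed

lemma unique_preimage_y0: "\<exists>!x. x \<in> subshift \<and> factor x = y0"
proof (rule ex1I[of _ eta])
  show "eta \<in> subshift \<and> factor eta = y0"
    using eta_in_subshift factor_eta by blast
  fix x assume x: "x \<in> subshift \<and> factor x = y0"
  show "x = eta"
  proof
    fix h
    obtain k where k: "h \<notin> y0 k"
      using Inter_y0 by (auto simp: set_eq_iff)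
    obtain a where a: "x \<in> skeleton (next_strict k) a" "factor x k = lcoset a (\<Gamma> k)"
      using factor_subshift x by blast
    have y0k: "y0 k = lcoset a (\<Gamma> k)"
      using a(2) x by simp
    text \<open>Both configurations carry the level-\<^term>\<open>k\<close> skeleton of \<^term>\<open>a\<close>, and
      \<^term>\<open>h\<close> lies outside its coset.\<close>
    have "h \<notin> lcoset a (\<Gamma> (next_strict k))"
      using k y0k lcoset_Gamma_antimono[of k "next_strict k" a] next_strict_gt[of k] by auto
    then have "x h = level_colour (exit_level a h)"
      using a(1) unfolding skeleton_def by blast
    moreover have "eta \<in> skeleton k a"
      unfolding eta_def by (rule colouring_in_skeleton[OF y0_in_odometer y0k])
    then have "eta h = level_colour (exit_level a h)"
      using k y0k unfolding skeleton_def by blast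
    ultimately show "x h = eta h"
      by simp
  qed
qed

lemma almost_1_1_ext_odometer_subshift: "almost_1_1_ext_odometer subshift \<Gamma>"
  unfolding almost_1_1_ext_odometer_def
  using continuous_map_factor factor_image factor_shift unique_preimage_y0 y0_in_odometer
  by blast

lemma toeplitz_subshift_subshift: "toeplitz_subshift subshift"
  unfolding toeplitz_subshift_def subshift_def eta_def
  using toeplitz_array_colouring[OF y0_in_odometer Inter_y0] by blast

end

section \<open>Random points of the odometer\<close>

fun partial_sum :: "(nat \<Rightarrow> 'g::group_add) \<Rightarrow> nat \<Rightarrow> 'g" where
  "partial_sum d 0 = d 0"
| "partial_sum d (Suc n) = partial_sum d n + d (Suc n)"

lemma partial_sum_cong: "(\<And>j. j \<le> n \<Longrightarrow> d j = e j) \<Longrightarrow> partial_sum d n = partial_sum e n"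
  by (induction n) auto

context normal_chain
begin

text \<open>\<^term>\<open>Gamma_prev j\<close> is \<open>\<Gamma>\<^sub>j\<^sub>-\<^sub>1\<close>, with the convention \<open>\<Gamma>\<^sub>-\<^sub>1 = G\<close>.\<close>

definition Gamma_prev :: "nat \<Rightarrow> 'g set" where
  "Gamma_prev j = (case j of 0 \<Rightarrow> UNIV | Suc i \<Rightarrow> \<Gamma> i)"

lemma subgrp_Gamma_prev: "subgrp (Gamma_prev j)"
  by (cases j) (auto simp: Gamma_prev_def subgrp_def subgrp_Gamma[unfolded subgrp_def])

lemma Gamma_subset_Gamma_prev: "\<Gamma> j \<subseteq> Gamma_prev j"
  by (cases j) (auto simp: Gamma_prev_def Gamma_Suc_subset[THEN subsetD])

definition transversal :: "nat \<Rightarrow> 'g set" where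
  "transversal j = some_elem ` {lcoset z (\<Gamma> j) | z. z \<in> Gamma_prev j}"

lemma some_elem_lcoset: "some_elem (lcoset z (\<Gamma> j)) \<in> lcoset z (\<Gamma> j)"
  using self_in_lcoset[OF subgrp_Gamma] by (intro some_elem_nonempty) blast

lemma lcoset_some_elem: "lcoset (some_elem (lcoset z (\<Gamma> j))) (\<Gamma> j) = lcoset z (\<Gamma> j)"
  using some_elem_lcoset lcoset_eq_iff_mem[OF subgrp_Gamma] by metis

lemma finite_transversal: "finite (transversal j)"
proof -
  have "{lcoset z (\<Gamma> j) | z. z \<in> Gamma_prev j} \<subseteq> cosets (\<Gamma> j)"
    using lcoset_in_cosets by blast
  then show ?thesis
    unfolding transversal_def using finite_cosets_Gamma finite_subset by blast
qed

lemma transversal_subset: "transversal j \<subseteq> Gamma_prev j"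
proof
  fix t assume "t \<in> transversal j"
  then obtain z where z: "z \<in> Gamma_prev j" "t = some_elem (lcoset z (\<Gamma> j))"
    unfolding transversal_def by blast
  then have "- z + t \<in> Gamma_prev j"
    using some_elem_lcoset[of z j] Gamma_subset_Gamma_prev by (auto simp: mem_lcoset)
  then have "z + (- z + t) \<in> Gamma_prev j"
    using subgrp_add[OF subgrp_Gamma_prev] z(1) by blast
  then show "t \<in> Gamma_prev j"
    by (simp add: add.assoc[symmetric])
qed

lemma transversal_represents:
  assumes "z \<in> Gamma_prev j"
  shows "\<exists>t\<in>transversal j. - t + z \<in> \<Gamma> j"
proof -
  define t where "t = some_elem (lcoset z (\<Gamma> j))"
  have "t \<in> transversal j"
    unfolding transversal_def t_def using assms by blast
  moreover have "lcoset t (\<Gamma> j) = lcoset z (\<Gamma> j)"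
    unfolding t_def by (rule lcoset_some_elem)
  ultimately show ?thesis
    using lcoset_eq_iff[OF subgrp_Gamma] by blast
qed

lemma transversal_unique:
  assumes "t \<in> transversal j" "t' \<in> transversal j" "- t + z \<in> \<Gamma> j" "- t' + z \<in> \<Gamma> j"
  shows "t = t'"
proof -
  have rep: "s = some_elem (lcoset s (\<Gamma> j))" if "s \<in> transversal j" for s
    using that lcoset_some_elem unfolding transversal_def by force
  have "lcoset t (\<Gamma> j) = lcoset t' (\<Gamma> j)"
    using assms(3,4) lcoset_eq_iff[OF subgrp_Gamma] by metis
  then show ?thesis
    using rep[OF assms(1)] rep[OF assms(2)] by simp
qed

lemma transversal_nonempty: "transversal j \<noteq> {}"
  using transversal_represents[of 0 j] subgrp_zero[OF subgrp_Gamma_prev] by blast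

text \<open>A random point of the odometer: its level-\<^term>\<open>n\<close> coset is
  \<open>(d\<^sub>0 + \<dots> + d\<^sub>n)\<Gamma>\<^sub>n\<close> for independent uniformly distributed digits
  \<open>d\<^sub>j\<close> from transversals of \<open>\<Gamma>\<^sub>j\<close> in \<open>\<Gamma>\<^sub>j\<^sub>-\<^sub>1\<close>.\<close>

definition digit_measure :: "(nat \<Rightarrow> 'g) measure" where
  "digit_measure = PiM UNIV (\<lambda>j. uniform_count_measure (transversal j))"

definition digit_point :: "(nat \<Rightarrow> 'g) \<Rightarrow> nat \<Rightarrow> 'g set" where
  "digit_point d n = lcoset (partial_sum d n) (\<Gamma> n)"

lemma space_digit_measure: "space digit_measure = {d. \<forall>j. d j \<in> transversal j}"
  unfolding digit_measure_def space_PiM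
  by (auto simp: space_uniform_count_measure PiE_def Pi_def)

lemma prob_space_digit_measure: "prob_space digit_measure"
  unfolding digit_measure_def
  by (intro prob_space_PiM prob_space_uniform_count_measure finite_transversal transversal_nonempty)

lemma digit_point_in_odometer:
  assumes "d \<in> space digit_measure"
  shows "digit_point d \<in> odometer \<Gamma>"
proof (rule odometerI)
  show "digit_point d n = lcoset (partial_sum d n) (\<Gamma> n)" for n
    unfolding digit_point_def ..
  fix n
  have "d (Suc n) \<in> \<Gamma> n"
    using assms transversal_subset[of "Suc n"] unfolding space_digit_measure Gamma_prev_def by auto
  then have "- partial_sum d n + (partial_sum d n + d (Suc n)) \<in> \<Gamma> n"
    by (simp add: add.assoc[symmetric])
  then have "lcoset (partial_sum d n) (\<Gamma> n) = lcoset (partial_sum d (Suc n)) (\<Gamma> n)"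
    using lcoset_eq_iff[OF subgrp_Gamma] by simp
  then show "lcoset (partial_sum d (Suc n)) (\<Gamma> n) = lcoset (partial_sum d n) (\<Gamma> n)"
    by (rule sym)
qed

lemma digit_point_0_eq_iff: "digit_point d 0 = lcoset z (\<Gamma> 0) \<longleftrightarrow> - d 0 + z \<in> \<Gamma> 0"
  by (simp add: digit_point_def lcoset_eq_iff[OF subgrp_Gamma])

lemma digit_point_Suc_eq_iff:
  "digit_point d (Suc n) = lcoset z (\<Gamma> (Suc n)) \<longleftrightarrow>
    - d (Suc n) + (- partial_sum d n + z) \<in> \<Gamma> (Suc n)"
  by (simp only: digit_point_def partial_sum.simps lcoset_eq_iff[OF subgrp_Gamma] minus_add add.assoc)

lemma digit_point_Suc_eq_iff_last_digit:
  assumes d: "d \<in> space digit_measure"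
    and t': "t' \<in> transversal (Suc n)" "- t' + (- partial_sum d n + z) \<in> \<Gamma> (Suc n)"
  shows "digit_point d (Suc n) = lcoset z (\<Gamma> (Suc n)) \<longleftrightarrow> d (Suc n) = t'"
  unfolding digit_point_Suc_eq_iff
proof
  assume "- d (Suc n) + (- partial_sum d n + z) \<in> \<Gamma> (Suc n)"
  moreover have "d (Suc n) \<in> transversal (Suc n)"
    using d unfolding space_digit_measure by blast
  ultimately show "d (Suc n) = t'"
    using transversal_unique t' by blast
qed (use t'(2) in simp)

lemma digit_point_fibre_cylinder:
  assumes "c \<in> cosets (\<Gamma> n)"
  shows "\<exists>t. (\<forall>j\<le>n. t j \<in> transversal j) \<and> lcoset (partial_sum t n) (\<Gamma> n) = c \<and>
    (\<forall>d\<in>space digit_measure. digit_point d n = c \<longleftrightarrow> (\<forall>j\<le>n. d j = t j))"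
  using assms
proof (induction n arbitrary: c)
  case 0
  then obtain z where c: "c = lcoset z (\<Gamma> 0)"
    unfolding mem_cosets by blast
  obtain t0 where t0: "t0 \<in> transversal 0" "- t0 + z \<in> \<Gamma> 0"
    using transversal_represents[of z 0] by (auto simp: Gamma_prev_def)
  have "digit_point d 0 = c \<longleftrightarrow> d 0 = t0" if "d \<in> space digit_measure" for d
    using transversal_unique[of "d 0" 0 t0 z] t0 that
    unfolding c digit_point_0_eq_iff space_digit_measure by auto
  moreover have "lcoset t0 (\<Gamma> 0) = c"
    using t0(2) lcoset_eq_iff[OF subgrp_Gamma] c by simp
  ultimately show ?case
    using t0(1) by (intro exI[of _ "\<lambda>_. t0"]) auto
next
  case (Suc n)
  then obtain z where c: "c = lcoset z (\<Gamma> (Suc n))"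
    unfolding mem_cosets by blast
  obtain t where t: "\<forall>j\<le>n. t j \<in> transversal j" "lcoset (partial_sum t n) (\<Gamma> n) = lcoset z (\<Gamma> n)"
    and fibre_n: "\<forall>d\<in>space digit_measure. digit_point d n = lcoset z (\<Gamma> n) \<longleftrightarrow> (\<forall>j\<le>n. d j = t j)"
    using Suc.IH[OF lcoset_in_cosets] by blast
  define s where "s = partial_sum t n"
  have "- s + z \<in> Gamma_prev (Suc n)"
    using t(2) lcoset_eq_iff[OF subgrp_Gamma] unfolding s_def Gamma_prev_def by simp
  then obtain t' where t': "t' \<in> transversal (Suc n)" "- t' + (- s + z) \<in> \<Gamma> (Suc n)"
    using transversal_represents by blast
  define t2 where "t2 = t(Suc n := t')"
  have partial_sum_n: "partial_sum d n = s" if "\<forall>j\<le>n. d j = t j" for d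
    unfolding s_def using that by (intro partial_sum_cong) auto
  have prefix: "\<forall>j\<le>n. d j = t j" if "d \<in> space digit_measure" "digit_point d (Suc n) = c" for d
    using odometer_lcoset_down[OF digit_point_in_odometer[OF that(1)], of "Suc n" z n] fibre_n that c
    by auto
  have last: "digit_point d (Suc n) = c \<longleftrightarrow> d (Suc n) = t'"
    if "d \<in> space digit_measure" "\<forall>j\<le>n. d j = t j" for d
    using digit_point_Suc_eq_iff_last_digit[OF that(1) t'(1)] t'(2) partial_sum_n[OF that(2)]
    unfolding c by simp
  have "digit_point d (Suc n) = c \<longleftrightarrow> (\<forall>j\<le>Suc n. d j = t2 j)" if "d \<in> space digit_measure" for d
    using prefix[OF that] last[OF that] unfolding t2_def by (auto simp: le_Suc_eq)
  moreover have "lcoset (s + t') (\<Gamma> (Suc n)) = c"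
    using t'(2) unfolding c lcoset_eq_iff[OF subgrp_Gamma] by (simp only: minus_add add.assoc)
  moreover have "partial_sum t2 (Suc n) = s + t'"
    unfolding s_def t2_def using partial_sum_cong[of n "t(Suc n := t')" t] by simp
  moreover have "\<forall>j\<le>Suc n. t2 j \<in> transversal j"
    using t(1) t'(1) unfolding t2_def by (auto simp: le_Suc_eq)
  ultimately show ?case
    by auto
qed

definition level_prob :: "nat \<Rightarrow> real" where
  "level_prob n = (\<Prod>j\<le>n. 1 / real (card (transversal j)))"

lemma cylinder_sets: "{d\<in>space digit_measure. \<forall>j\<le>n. d j = t j} \<in> sets digit_measure"
proof -
  have "{d\<in>space digit_measure. \<forall>j\<le>n. d j = t j} =
      {d\<in>space digit_measure. \<forall>j\<in>{..n}. d j \<in> {x\<in>transversal j. x = t j}}"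
    unfolding space_digit_measure by auto
  moreover have "{d\<in>space digit_measure. \<forall>j\<in>{..n}. d j \<in> {x\<in>transversal j. x = t j}} \<in> sets digit_measure"
    unfolding digit_measure_def
    by (intro sets.sets_Collect_finite_All sets_Collect_single')
      (auto simp: sets_uniform_count_measure space_uniform_count_measure)
  ultimately show ?thesis
    by (simp only:)
qed

lemma measure_cylinder:
  assumes "\<And>j. j \<le> n \<Longrightarrow> t j \<in> transversal j"
  shows "measure digit_measure {d\<in>space digit_measure. \<forall>j\<le>n. d j = t j} = level_prob n"
proof -
  interpret uniform: prob_space "uniform_count_measure (transversal j)" for j
    by (intro prob_space_uniform_count_measure finite_transversal transversal_nonempty)
  interpret product_prob_space "\<lambda>j. uniform_count_measure (transversal j)" UNIV
    by unfold_locales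
  have "measure digit_measure {d\<in>space digit_measure. \<forall>j\<in>{..n}. d j \<in> {t j}} =
      (\<Prod>j\<le>n. measure (uniform_count_measure (transversal j)) {t j})"
    unfolding digit_measure_def
    by (subst measure_PiM_emb[symmetric])
      (auto simp: sets_uniform_count_measure assms prod_emb_def space_PiM PiE_def Pi_def
        intro!: arg_cong[where f="measure _"])
  also have "\<dots> = level_prob n"
    unfolding level_prob_def using assms
    by (intro prod.cong refl) (simp add: measure_uniform_count_measure finite_transversal)
  finally show ?thesis
    by (simp add: Ball_def atMost_iff)
qed

lemma digit_point_fibre_sets: "{d\<in>space digit_measure. digit_point d n = c} \<in> sets digit_measure"
proof (cases "c \<in> cosets (\<Gamma> n)")
  case True
  then obtain t where "\<forall>d\<in>space digit_measure. digit_point d n = c \<longleftrightarrow> (\<forall>j\<le>n. d j = t j)"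
    using digit_point_fibre_cylinder by blast
  then have "{d\<in>space digit_measure. digit_point d n = c} = {d\<in>space digit_measure. \<forall>j\<le>n. d j = t j}"
    by blast
  then show ?thesis
    by (simp only: cylinder_sets)
next
  case False
  then have "{d\<in>space digit_measure. digit_point d n = c} = {}"
    unfolding digit_point_def using lcoset_in_cosets by auto
  then show ?thesis
    by (simp only: sets.empty_sets)
qed

lemma measure_digit_point_fibre:
  assumes "c \<in> cosets (\<Gamma> n)"
  shows "measure digit_measure {d\<in>space digit_measure. digit_point d n = c} = level_prob n"
proof -
  obtain t where t: "\<forall>j\<le>n. t j \<in> transversal j"
    and fibre: "\<forall>d\<in>space digit_measure. digit_point d n = c \<longleftrightarrow> (\<forall>j\<le>n. d j = t j)"
    using digit_point_fibre_cylinder[OF assms] by blast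
  from fibre have "{d\<in>space digit_measure. digit_point d n = c} = {d\<in>space digit_measure. \<forall>j\<le>n. d j = t j}"
    by blast
  then show ?thesis
    using measure_cylinder t by simp
qed

lemma measurable_digit_point:
  "(\<lambda>d. digit_point d n) \<in> measurable digit_measure (count_space (cosets (\<Gamma> n)))"
proof (subst measurable_count_space_eq2[OF finite_cosets_Gamma], intro conjI ballI)
  show "(\<lambda>d. digit_point d n) \<in> space digit_measure \<rightarrow> cosets (\<Gamma> n)"
    unfolding digit_point_def using lcoset_in_cosets by blast
  fix c
  have "(\<lambda>d. digit_point d n) -` {c} \<inter> space digit_measure = {d\<in>space digit_measure. digit_point d n = c}"
    by auto
  then show "(\<lambda>d. digit_point d n) -` {c} \<inter> space digit_measure \<in> sets digit_measure"
    by (simp only: digit_point_fibre_sets)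
qed

lemma pred_mem_digit_point[measurable]: "Measurable.pred digit_measure (\<lambda>d. h \<in> digit_point d k)"
  by (rule measurable_compose[OF measurable_digit_point measurable_count_space])

lemma measure_digit_point_in:
  assumes "D \<subseteq> cosets (\<Gamma> m)"
  shows "measure digit_measure {d\<in>space digit_measure. digit_point d m \<in> D} = card D * level_prob m"
proof -
  interpret prob_space digit_measure
    by (rule prob_space_digit_measure)
  have D: "finite D"
    using assms finite_cosets_Gamma finite_subset by blast
  have "{d\<in>space digit_measure. digit_point d m \<in> D} = (\<Union>c\<in>D. {d\<in>space digit_measure. digit_point d m = c})"
    by blast
  also have "measure digit_measure \<dots> = (\<Sum>c\<in>D. measure digit_measure {d\<in>space digit_measure. digit_point d m = c})"
    by (rule finite_measure_finite_Union[OF D])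
      (auto simp: digit_point_fibre_sets disjoint_family_on_def)
  also have "\<dots> = (\<Sum>c\<in>D. level_prob m)"
    using assms by (intro sum.cong refl measure_digit_point_fibre) auto
  finally show ?thesis
    by simp
qed

end

context infinite_normal_chain
begin

lemma pred_Inter_digit_point_empty[measurable]:
  "Measurable.pred digit_measure (\<lambda>d. (\<Inter>n. digit_point d n) = {})"
proof -
  have eq: "(\<Inter>n. digit_point d n) = {} \<longleftrightarrow> (\<forall>h. \<exists>n. h \<notin> digit_point d n)" for d
    by (auto simp: set_eq_iff)
  show ?thesis
    unfolding eq by measurable
qed

lemma two_le_card_transversal:
  assumes "strict_level j"
  shows "2 \<le> card (transversal j)"
proof -
  obtain i where i: "j = Suc i"
    using assms unfolding strict_level_def by (cases j) auto
  have "\<Gamma> j \<noteq> Gamma_prev j"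
    using assms i unfolding strict_level_def Gamma_prev_def by simp
  then obtain \<gamma> where \<gamma>: "\<gamma> \<in> Gamma_prev j" "\<gamma> \<notin> \<Gamma> j"
    using Gamma_subset_Gamma_prev by blast
  obtain t0 where t0: "t0 \<in> transversal j" "- t0 + 0 \<in> \<Gamma> j"
    using transversal_represents[of 0 j] subgrp_zero[OF subgrp_Gamma_prev] by blast
  obtain t1 where t1: "t1 \<in> transversal j" "- t1 + \<gamma> \<in> \<Gamma> j"
    using transversal_represents[OF \<gamma>(1)] by blast
  have "t0 \<noteq> t1"
  proof
    assume "t0 = t1"
    then have "t0 \<in> \<Gamma> j" "- t0 + \<gamma> \<in> \<Gamma> j"
      using t0 t1 subgrp_uminus_iff[OF subgrp_Gamma] by auto
    then have "t0 + (- t0 + \<gamma>) \<in> \<Gamma> j"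
      using subgrp_add[OF subgrp_Gamma] by blast
    then show False
      using \<gamma>(2) by (simp add: add.assoc[symmetric])
  qed
  then have "card {t0, t1} \<le> card (transversal j)"
    using t0 t1 finite_transversal by (intro card_mono) auto
  then show ?thesis
    using \<open>t0 \<noteq> t1\<close> by simp
qed

lemma level_prob_Suc: "level_prob (Suc n) = level_prob n / real (card (transversal (Suc n)))"
  unfolding level_prob_def by (simp add: prod.atMost_Suc)

lemma card_transversal_pos: "0 < card (transversal j)"
  using finite_transversal transversal_nonempty card_gt_0_iff by blast

lemma level_prob_nonneg: "0 \<le> level_prob n"
  unfolding level_prob_def by (intro prod_nonneg) auto

lemma level_prob_antimono: "m \<le> n \<Longrightarrow> level_prob n \<le> level_prob m"
proof (induction rule: dec_induct)
  case (step n)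
  have "1 \<le> real (card (transversal (Suc n)))"
    using card_transversal_pos[of "Suc n"] by linarith
  then have "level_prob (Suc n) \<le> level_prob n"
    unfolding level_prob_Suc using level_prob_nonneg[of n] by (simp add: divide_le_eq mult_le_cancel_left1)
  with step.IH show ?case
    by simp
qed simp

lemma level_prob_next_strict: "level_prob (next_strict k) \<le> level_prob k / 2"
proof -
  obtain p where p: "next_strict k = Suc p" "k \<le> p"
    using next_strict_gt[of k] by (cases "next_strict k") auto
  have "2 \<le> real (card (transversal (Suc p)))"
    using two_le_card_transversal[OF strict_level_next_strict[of k]] p(1) by simp
  then have "level_prob (Suc p) \<le> level_prob p / 2"
    unfolding level_prob_Suc using level_prob_nonneg[of p] by (intro divide_left_mono) auto
  then show ?thesis
    using p level_prob_antimono[OF p(2)] by simp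
qed

lemma level_prob_le_power: "\<exists>k. level_prob k \<le> (1/2) ^ i"
proof (induction i)
  case 0
  have "level_prob 0 \<le> 1"
    unfolding level_prob_def using card_transversal_pos[of 0] by simp
  then show ?case
    by auto
next
  case (Suc i)
  then obtain k where "level_prob k \<le> (1/2) ^ i"
    by blast
  then have "level_prob (next_strict k) \<le> (1/2) ^ Suc i"
    using level_prob_next_strict[of k] by simp
  then show ?case
    by blast
qed

lemma digits_through_point_null:
  "{d\<in>space digit_measure. \<forall>k. h \<in> digit_point d k} \<in> null_sets digit_measure"
proof -
  interpret prob_space digit_measure
    by (rule prob_space_digit_measure)
  let ?N = "{d\<in>space digit_measure. \<forall>k. h \<in> digit_point d k}"
  have "?N \<in> sets digit_measure"
    by measurable
  have "measure digit_measure ?N \<le> level_prob k" for k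
  proof -
    have "digit_point d k = lcoset h (\<Gamma> k)" if "h \<in> digit_point d k" for d
      using that unfolding digit_point_def using lcoset_eq_iff_mem[OF subgrp_Gamma] by blast
    then have "?N \<subseteq> {d\<in>space digit_measure. digit_point d k = lcoset h (\<Gamma> k)}"
      by blast
    then have "measure digit_measure ?N \<le> measure digit_measure {d\<in>space digit_measure. digit_point d k = lcoset h (\<Gamma> k)}"
      using digit_point_fibre_sets by (intro finite_measure_mono) auto
    also have "\<dots> = level_prob k"
      using measure_digit_point_fibre lcoset_in_cosets by blast
    finally show ?thesis .
  qed
  then have "measure digit_measure ?N \<le> (1/2) ^ i" for i
    using level_prob_le_power[of i] by (meson order_trans)
  moreover have "(\<lambda>i. (1/2::real) ^ i) \<longlonglongrightarrow> 0"
    by (rule LIMSEQ_realpow_zero) auto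
  ultimately have "measure digit_measure ?N \<le> 0"
    by (intro LIMSEQ_le_const) auto
  then show ?thesis
    using \<open>?N \<in> sets digit_measure\<close> by (simp add: emeasure_eq_measure null_sets_def measure_nonneg antisym)
qed

lemma digits_Inter_nonempty_null:
  "{d\<in>space digit_measure. (\<Inter>n. digit_point d n) \<noteq> {}} \<in> null_sets digit_measure"
proof -
  have "{d\<in>space digit_measure. (\<Inter>n. digit_point d n) \<noteq> {}} =
      (\<Union>h. {d\<in>space digit_measure. \<forall>k. h \<in> digit_point d k})"
    by blast
  then show ?thesis
    using digits_through_point_null by (simp add: null_sets_UN)
qed

lemma ex_odometer_Inter_empty: "\<exists>y\<in>odometer \<Gamma>. (\<Inter>n. y n) = {}"
proof -
  interpret prob_space digit_measure
    by (rule prob_space_digit_measure)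
  have "emeasure digit_measure {d\<in>space digit_measure. (\<Inter>n. digit_point d n) \<noteq> {}} = 0"
    using digits_Inter_nonempty_null by blast
  then have "{d\<in>space digit_measure. (\<Inter>n. digit_point d n) \<noteq> {}} \<noteq> space digit_measure"
    using emeasure_space_1 by auto
  then obtain d where "d \<in> space digit_measure" "(\<Inter>n. digit_point d n) = {}"
    by blast
  then show ?thesis
    using digit_point_in_odometer by blast
qed

end

section \<open>Regularity\<close>

instance bool :: second_countable_topology
proof
  have "open = generate_topology (UNIV :: bool set set)"
  proof (intro ext iffI)
    fix S :: "bool set"
    show "generate_topology UNIV S"
      by (rule generate_topology.Basis) simp
  next
    fix S :: "bool set"
    show "open S"
      by (rule discrete_topology_class.open_discrete)
  qed
  then show "\<exists>B::bool set set. countable B \<and> open = generate_topology B"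
    by (intro exI[of _ UNIV]) simp
qed

abbreviation bool_product :: "('g \<Rightarrow> bool) measure" where
  "bool_product \<equiv> PiM UNIV (\<lambda>_. borel)"

lemma sets_bool_product: "sets (bool_product :: ('g::countable \<Rightarrow> bool) measure) = sets borel"
  by (rule sets_PiM_equal_borel)

lemma pred_coordinate_eq[measurable]: "Measurable.pred bool_product (\<lambda>x. x i = (v::bool))"
proof -
  have "{x\<in>space bool_product. x i \<in> {v}} \<in> sets bool_product"
    by (rule sets_Collect_single') (auto simp: sets_borel_eq_count_space)
  then show ?thesis
    by (simp add: pred_def)
qed

lemma prod_emb_bool_product:
  "prod_emb UNIV (\<lambda>_. borel :: bool measure) J (PiE J A) = {x. \<forall>j\<in>J. x j \<in> A j}"
  unfolding prod_emb_def by (auto simp: PiE_def Pi_def restrict_def extensional_def)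

context infinite_normal_chain
begin

text \<open>The cosets of \<open>\<Gamma>\<^sub>m\<close> whose skeleton already decides the cylinder event
  \<open>x (f j) \<in> A j\<close> for all \<open>j \<in> J\<close>, and decides it positively.\<close>

definition deciding_cosets :: "'g set \<Rightarrow> ('g \<Rightarrow> bool set) \<Rightarrow> ('g \<Rightarrow> 'g) \<Rightarrow> nat \<Rightarrow> 'g set set" where
  "deciding_cosets J A f m = {c \<in> cosets (\<Gamma> m). \<exists>a. c = lcoset a (\<Gamma> m) \<and>
    (\<forall>j\<in>J. f j \<notin> c \<and> level_colour (exit_level a (f j)) \<in> A j)}"

lemma card_deciding_cosets_shift:
  "card (deciding_cosets J A (\<lambda>j. - g + j) m) = card (deciding_cosets J A (\<lambda>j. j) m)"
proof (rule bij_betw_same_card)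
  let ?D = "deciding_cosets J A"
  have mem: "lcoset a (\<Gamma> m) \<in> ?D f m \<longleftrightarrow>
      (\<forall>j\<in>J. f j \<notin> lcoset a (\<Gamma> m) \<and> level_colour (exit_level a (f j)) \<in> A j)" for a f
  proof
    assume "lcoset a (\<Gamma> m) \<in> ?D f m"
    then obtain b where b: "lcoset a (\<Gamma> m) = lcoset b (\<Gamma> m)"
      "\<forall>j\<in>J. f j \<notin> lcoset b (\<Gamma> m) \<and> level_colour (exit_level b (f j)) \<in> A j"
      unfolding deciding_cosets_def by blast
    then show "\<forall>j\<in>J. f j \<notin> lcoset a (\<Gamma> m) \<and> level_colour (exit_level a (f j)) \<in> A j"
      using exit_level_cong[OF b(1)] by simp
  qed (auto simp: deciding_cosets_def lcoset_in_cosets)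
  show "bij_betw (\<lambda>c. (+) g ` c) (?D (\<lambda>j. - g + j) m) (?D (\<lambda>j. j) m)"
  proof (rule bij_betw_byWitness[where f'="\<lambda>c. (+) (- g) ` c"])
    show "\<forall>c\<in>?D (\<lambda>j. - g + j) m. (+) (- g) ` (+) g ` c = c"
      by (simp add: image_image add.assoc[symmetric])
    show "\<forall>c\<in>?D (\<lambda>j. j) m. (+) g ` (+) (- g) ` c = c"
      by (simp add: image_image add.assoc[symmetric])
    show "(\<lambda>c. (+) g ` c) ` ?D (\<lambda>j. - g + j) m \<subseteq> ?D (\<lambda>j. j) m"
    proof
      fix c' assume "c' \<in> (\<lambda>c. (+) g ` c) ` ?D (\<lambda>j. - g + j) m"
      then obtain a where "c' = (+) g ` lcoset a (\<Gamma> m)" "lcoset a (\<Gamma> m) \<in> ?D (\<lambda>j. - g + j) m"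
        unfolding deciding_cosets_def by blast
      then have "c' = lcoset (g + a) (\<Gamma> m)"
        "\<forall>j\<in>J. - g + j \<notin> lcoset a (\<Gamma> m) \<and> level_colour (exit_level a (- g + j)) \<in> A j"
        by (simp_all add: plus_image_lcoset mem)
      then show "c' \<in> ?D (\<lambda>j. j) m"
        by (simp add: mem mem_lcoset_plus exit_level_plus)
    qed
    show "(\<lambda>c. (+) (- g) ` c) ` ?D (\<lambda>j. j) m \<subseteq> ?D (\<lambda>j. - g + j) m"
    proof
      fix c' assume "c' \<in> (\<lambda>c. (+) (- g) ` c) ` ?D (\<lambda>j. j) m"
      then obtain a where "c' = (+) (- g) ` lcoset a (\<Gamma> m)" "lcoset a (\<Gamma> m) \<in> ?D (\<lambda>j. j) m"
        unfolding deciding_cosets_def by blast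
      then have "c' = lcoset (- g + a) (\<Gamma> m)"
        "\<forall>j\<in>J. j \<notin> lcoset a (\<Gamma> m) \<and> level_colour (exit_level a j) \<in> A j"
        by (simp_all add: plus_image_lcoset mem)
      then show "c' \<in> ?D (\<lambda>j. - g + j) m"
        by (simp add: mem mem_lcoset_plus exit_level_plus add.assoc[symmetric])
    qed
  qed
qed

end

context toeplitz_construction
begin

text \<open>Off the null set of digit sequences whose point of the odometer has a nonempty
  intersection, the random configuration is the colouring of that point; \<^term>\<open>eta\<close> is
  only a default value.\<close>

definition random_config :: "(nat \<Rightarrow> 'g) \<Rightarrow> 'g \<Rightarrow> bool" where
  "random_config d = (if (\<Inter>n. digit_point d n) = {} then colouring (digit_point d) else eta)"

lemma random_config_in_subshift: "d \<in> space digit_measure \<Longrightarrow> random_config d \<in> subshift"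
  unfolding random_config_def
  using colouring_in_subshift[OF digit_point_in_odometer] eta_in_subshift by auto

lemma random_config_eq_level_colour:
  assumes "d \<in> space digit_measure" "(\<Inter>n. digit_point d n) = {}"
    and "digit_point d m = lcoset a (\<Gamma> m)" "h \<notin> lcoset a (\<Gamma> m)"
  shows "random_config d h = level_colour (exit_level a h)"
  using colouring_in_skeleton[OF digit_point_in_odometer[OF assms(1)] assms(3)] assms(2,4)
  unfolding random_config_def skeleton_def by simp

lemma random_config_periodic:
  assumes "d \<in> space digit_measure"
  shows "\<exists>k. \<forall>\<gamma>\<in>\<Gamma> k. random_config d (\<gamma> + h) = random_config d h"
proof (cases "(\<Inter>n. digit_point d n) = {}")
  case True
  then show ?thesis
    using colouring_periodic[OF digit_point_in_odometer[OF assms] True]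
    unfolding random_config_def by simp
next
  case False
  then show ?thesis
    using colouring_periodic[OF y0_in_odometer Inter_y0] unfolding random_config_def eta_def by simp
qed

lemma measurable_random_config_at:
  "(\<lambda>d. random_config d h) \<in> measurable digit_measure (count_space UNIV)"
proof -
  have "(\<lambda>d. random_config d h) = (\<lambda>d. if (\<Inter>n. digit_point d n) = {}
      then level_colour (LEAST k. h \<notin> digit_point d k) else eta h)"
    by (auto simp: random_config_def colouring_def)
  moreover have "(\<lambda>d. if (\<Inter>n. digit_point d n) = {} then level_colour (LEAST k. h \<notin> digit_point d k)
      else eta h) \<in> measurable digit_measure (count_space UNIV)"
    by measurable
  ultimately show ?thesis
    by (simp only:)
qed

lemma measurable_shift_random_config:
  "(\<lambda>d. shift g (random_config d)) \<in> measurable digit_measure bool_product"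
  unfolding shift_def
proof (rule measurable_PiM_single')
  show "(\<lambda>d. random_config d (- g + i)) \<in> measurable digit_measure borel" for i
    using measurable_random_config_at measurable_cong_sets[OF refl sets_borel_eq_count_space] by blast
qed (auto simp: space_PiM)

lemma measurable_random_config: "random_config \<in> measurable digit_measure bool_product"
  using measurable_shift_random_config[of 0] by (simp add: shift_def)

lemma measurable_random_config_subshift:
  "random_config \<in> measurable digit_measure (restrict_space borel subshift)"
proof (rule measurable_restrict_space2)
  show "random_config \<in> borel_measurable digit_measure"
    using measurable_random_config measurable_cong_sets[OF refl sets_PiM_equal_borel] by blast
qed (simp add: random_config_in_subshift)

lemma decided_iff_in_deciding_cosets:
  assumes "d \<in> space digit_measure" "(\<Inter>n. digit_point d n) = {}"
  shows "(\<forall>j\<in>J. f j \<notin> digit_point d m \<and> random_config d (f j) \<in> A j) \<longleftrightarrow>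
    digit_point d m \<in> deciding_cosets J A f m"
proof
  assume decided: "\<forall>j\<in>J. f j \<notin> digit_point d m \<and> random_config d (f j) \<in> A j"
  have dm: "digit_point d m = lcoset (partial_sum d m) (\<Gamma> m)"
    unfolding digit_point_def ..
  show "digit_point d m \<in> deciding_cosets J A f m"
    unfolding deciding_cosets_def mem_Collect_eq
    using decided random_config_eq_level_colour[OF assms dm] dm lcoset_in_cosets
    by (intro conjI exI[of _ "partial_sum d m"]) auto
next
  assume "digit_point d m \<in> deciding_cosets J A f m"
  then obtain a where a: "digit_point d m = lcoset a (\<Gamma> m)"
    "\<forall>j\<in>J. f j \<notin> lcoset a (\<Gamma> m) \<and> level_colour (exit_level a (f j)) \<in> A j"
    unfolding deciding_cosets_def by blast
  then show "\<forall>j\<in>J. f j \<notin> digit_point d m \<and> random_config d (f j) \<in> A j"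
    using random_config_eq_level_colour[OF assms a(1)] by simp
qed

lemma measure_decided_cylinder:
  "measure digit_measure {d\<in>space digit_measure. (\<Inter>n. digit_point d n) = {} \<and>
      (\<forall>j\<in>J. f j \<notin> digit_point d m \<and> random_config d (f j) \<in> A j)} =
    card (deciding_cosets J A f m) * level_prob m"
proof -
  let ?D = "{d\<in>space digit_measure. digit_point d m \<in> deciding_cosets J A f m}"
  let ?N = "{d\<in>space digit_measure. (\<Inter>n. digit_point d n) \<noteq> {}}"
  have "{d\<in>space digit_measure. (\<Inter>n. digit_point d n) = {} \<and>
      (\<forall>j\<in>J. f j \<notin> digit_point d m \<and> random_config d (f j) \<in> A j)} = ?D - ?N"
    using decided_iff_in_deciding_cosets by blast
  moreover have "?D \<in> sets digit_measure"
    using measurable_sets[OF measurable_digit_point, of "deciding_cosets J A f m" m]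
    unfolding deciding_cosets_def by (simp add: vimage_def Int_def conj_commute)
  ultimately show ?thesis
    using measure_Diff_null_set[OF _ digits_Inter_nonempty_null]
      measure_digit_point_in[of "deciding_cosets J A f m" m]
    unfolding deciding_cosets_def by simp
qed

lemma tendsto_measure_cylinder:
  assumes J: "finite J"
  shows "(\<lambda>m. card (deciding_cosets J A f m) * level_prob m) \<longlonglongrightarrow>
    measure digit_measure {d\<in>space digit_measure. \<forall>j\<in>J. random_config d (f j) \<in> A j}"
proof -
  interpret prob_space digit_measure
    by (rule prob_space_digit_measure)
  define E where "E = {d\<in>space digit_measure. \<forall>j\<in>J. random_config d (f j) \<in> A j}"
  define V where "V = {d\<in>space digit_measure. (\<Inter>n. digit_point d n) = {}}"
  define C where "C m = {d\<in>space digit_measure. \<forall>j\<in>J. f j \<notin> digit_point d m}" for m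
  have [measurable]: "Measurable.pred digit_measure (\<lambda>d. random_config d (f j) \<in> A j)" for j
    by (rule measurable_compose[OF measurable_random_config_at measurable_count_space])
  have E: "E \<in> sets digit_measure"
    unfolding E_def using J by (intro sets.sets_Collect_finite_All) auto
  have "range (\<lambda>m. E \<inter> V \<inter> C m) \<subseteq> sets digit_measure"
    unfolding V_def C_def using E J by (auto intro!: sets.sets_Collect_finite_All)
  moreover have "incseq (\<lambda>m. E \<inter> V \<inter> C m)"
  proof (rule incseq_SucI)
    show "E \<inter> V \<inter> C m \<subseteq> E \<inter> V \<inter> C (Suc m)" for m
      unfolding C_def using odometer_antimono[OF digit_point_in_odometer, of _ m "Suc m"] by auto
  qed
  moreover have "(\<Union>m. E \<inter> V \<inter> C m) = E \<inter> V"
  proof -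
    have "\<exists>m. d \<in> C m" if "d \<in> V" for d
    proof -
      have "d \<in> space digit_measure" "(\<Inter>n. digit_point d n) = {}"
        using that unfolding V_def by auto
      then obtain m where "\<forall>h\<in>f ` J. h \<notin> digit_point d m"
        using odometer_level_avoiding[OF digit_point_in_odometer] J by blast
      then show ?thesis
        using that unfolding C_def V_def by blast
    qed
    then show ?thesis
      by blast
  qed
  ultimately have "(\<lambda>m. measure digit_measure (E \<inter> V \<inter> C m)) \<longlonglongrightarrow> measure digit_measure (E \<inter> V)"
    using finite_Lim_measure_incseq by metis
  moreover have "E \<inter> V = E - {d\<in>space digit_measure. (\<Inter>n. digit_point d n) \<noteq> {}}"
    unfolding E_def V_def by blast
  then have "measure digit_measure (E \<inter> V) = measure digit_measure E"
    using measure_Diff_null_set[OF E digits_Inter_nonempty_null] by simp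
  moreover have "E \<inter> V \<inter> C m = {d\<in>space digit_measure. (\<Inter>n. digit_point d n) = {} \<and>
      (\<forall>j\<in>J. f j \<notin> digit_point d m \<and> random_config d (f j) \<in> A j)}" for m
    unfolding E_def V_def C_def by blast
  ultimately show ?thesis
    unfolding E_def by (simp add: measure_decided_cylinder)
qed

lemma measure_shift_cylinder:
  assumes "finite J"
  shows "measure digit_measure {d\<in>space digit_measure. \<forall>j\<in>J. random_config d (- g + j) \<in> A j} =
    measure digit_measure {d\<in>space digit_measure. \<forall>j\<in>J. random_config d j \<in> A j}"
  using LIMSEQ_unique[OF tendsto_measure_cylinder[OF assms, of A "\<lambda>j. - g + j"]]
    tendsto_measure_cylinder[OF assms, of A "\<lambda>j. j"]
  unfolding card_deciding_cosets_shift by blast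

lemma distr_shift_random_config:
  "distr digit_measure bool_product (\<lambda>d. shift g (random_config d)) =
    distr digit_measure bool_product random_config"
proof (rule measure_eqI_PiM_infinite)
  interpret prob_space digit_measure
    by (rule prob_space_digit_measure)
  show "sets (distr digit_measure bool_product (\<lambda>d. shift g (random_config d))) = sets bool_product"
    "sets (distr digit_measure bool_product random_config) = sets bool_product"
    by simp_all
  show "finite_measure (distr digit_measure bool_product (\<lambda>d. shift g (random_config d)))"
  proof -
    interpret shifted: prob_space "distr digit_measure bool_product (\<lambda>d. shift g (random_config d))"
      by (rule prob_space_distr[OF measurable_shift_random_config])
    show ?thesis
      by (rule finite_measureI) (simp add: shifted.emeasure_space_1)
  qed
  fix A :: "'g \<Rightarrow> bool set" and J :: "'g set"
  assume J: "finite J" "J \<subseteq> UNIV" "\<And>i. i \<in> J \<Longrightarrow> A i \<in> sets borel"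
  let ?C = "prod_emb UNIV (\<lambda>_. borel) J (PiE J A)"
  have C: "?C \<in> sets bool_product"
    using J by (intro sets_PiM_I) auto
  have "emeasure (distr digit_measure bool_product (\<lambda>d. shift g (random_config d))) ?C =
      emeasure digit_measure {d\<in>space digit_measure. \<forall>j\<in>J. random_config d (- g + j) \<in> A j}"
    by (subst emeasure_distr[OF measurable_shift_random_config C])
      (auto simp: prod_emb_bool_product shift_def intro!: arg_cong[where f="emeasure digit_measure"])
  also have "\<dots> = emeasure digit_measure {d\<in>space digit_measure. \<forall>j\<in>J. random_config d j \<in> A j}"
    using measure_shift_cylinder[OF J(1)] by (simp add: emeasure_eq_measure)
  also have "\<dots> = emeasure (distr digit_measure bool_product random_config) ?C"
    by (subst emeasure_distr[OF measurable_random_config C])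
      (auto simp: prod_emb_bool_product intro!: arg_cong[where f="emeasure digit_measure"])
  finally show "emeasure (distr digit_measure bool_product (\<lambda>d. shift g (random_config d))) ?C =
      emeasure (distr digit_measure bool_product random_config) ?C" .
qed

lemma emeasure_shift_random_config:
  assumes B: "B \<in> sets borel"
  shows "emeasure digit_measure {d\<in>space digit_measure. shift g (random_config d) \<in> B} =
    emeasure digit_measure {d\<in>space digit_measure. random_config d \<in> B}"
proof -
  have B': "B \<in> sets bool_product"
    by (subst sets_bool_product) (rule B)
  show ?thesis
    using arg_cong[OF distr_shift_random_config, of "\<lambda>M. emeasure M B"]
      emeasure_distr[OF measurable_shift_random_config B'] emeasure_distr[OF measurable_random_config B']
    by (simp add: vimage_def Int_def conj_commute)
qed

definition config_law :: "('g \<Rightarrow> bool) measure" where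
  "config_law = distr digit_measure (restrict_space borel subshift) random_config"

lemma sets_config_law: "sets config_law = sets (restrict_space borel subshift)"
  unfolding config_law_def by simp

lemma space_config_law: "space config_law = subshift"
  unfolding config_law_def by (simp add: space_restrict_space)

lemma prob_space_config_law: "prob_space config_law"
  unfolding config_law_def
  by (rule prob_space.prob_space_distr[OF prob_space_digit_measure measurable_random_config_subshift])

lemma config_law_shift_invariant:
  assumes "A \<in> sets config_law"
  shows "emeasure config_law (shift g -` A \<inter> subshift) = emeasure config_law A"
proof -
  have A: "A \<in> sets (restrict_space borel subshift)"
    using assms by (simp only: sets_config_law)
  then obtain B where B: "B \<in> sets borel" "A = subshift \<inter> B"
    unfolding sets_restrict_space by blast
  have "shift g -` B \<in> sets borel"
    using measurable_sets[OF borel_measurable_continuous_onI[OF continuous_shift] B(1)] by simp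
  then have shifted: "shift g -` A \<inter> subshift \<in> sets (restrict_space borel subshift)"
    unfolding B(2) sets_restrict_space by (auto intro!: image_eqI[of _ _ "shift g -` B"] simp: shift_in_subshift)
  have "emeasure config_law (shift g -` A \<inter> subshift) =
      emeasure digit_measure (random_config -` (shift g -` A \<inter> subshift) \<inter> space digit_measure)"
    unfolding config_law_def by (rule emeasure_distr[OF measurable_random_config_subshift shifted])
  also have "\<dots> = emeasure digit_measure {d\<in>space digit_measure. shift g (random_config d) \<in> B}"
    using random_config_in_subshift shift_in_subshift unfolding B(2)
    by (intro arg_cong[where f="emeasure digit_measure"]) auto
  also have "\<dots> = emeasure digit_measure {d\<in>space digit_measure. random_config d \<in> B}"
    by (rule emeasure_shift_random_config[OF B(1)])
  also have "\<dots> = emeasure digit_measure (random_config -` A \<inter> space digit_measure)"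
    using random_config_in_subshift unfolding B(2) by (intro arg_cong[where f="emeasure digit_measure"]) auto
  also have "\<dots> = emeasure config_law A"
    unfolding config_law_def by (rule emeasure_distr[OF measurable_random_config_subshift A, symmetric])
  finally show ?thesis .
qed

lemma sets_periodic_configs:
  "{x. \<forall>h. \<exists>k \<alpha>. \<forall>\<gamma>\<in>\<Gamma> k. x (\<gamma> + h) = (\<alpha>::bool)} \<in> sets (borel :: ('g \<Rightarrow> bool) measure)"
proof -
  have "Measurable.pred bool_product (\<lambda>x. \<forall>h. \<exists>k \<alpha>. \<forall>\<gamma>\<in>\<Gamma> k. x (\<gamma> + h) = (\<alpha>::bool))"
    by measurable
  then have "{x\<in>space bool_product. \<forall>h. \<exists>k \<alpha>. \<forall>\<gamma>\<in>\<Gamma> k. x (\<gamma> + h) = (\<alpha>::bool)} \<in> sets bool_product"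
    by (simp add: pred_def)
  then show ?thesis
    unfolding sets_bool_product by (simp add: space_PiM)
qed

lemma AE_toeplitz_config_law: "AE x in config_law. toeplitz_array x"
proof -
  let ?P = "{x. \<forall>h. \<exists>k \<alpha>. \<forall>\<gamma>\<in>\<Gamma> k. x (\<gamma> + h) = (\<alpha>::bool)}"
  have "space borel - ?P \<in> sets borel"
    by (rule sets.compl_sets[OF sets_periodic_configs])
  then have "- ?P \<in> sets borel"
    by (simp only: space_borel Compl_eq_Diff_UNIV)
  then have N: "subshift \<inter> - ?P \<in> sets (restrict_space borel subshift)"
    unfolding sets_restrict_space by (rule image_eqI[OF refl])
  have "random_config d \<in> ?P" if d: "d \<in> space digit_measure" for d
  proof (intro CollectI allI)
    fix h
    obtain k where "\<forall>\<gamma>\<in>\<Gamma> k. random_config d (\<gamma> + h) = random_config d h"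
      using random_config_periodic[OF d] by blast
    then show "\<exists>k \<alpha>. \<forall>\<gamma>\<in>\<Gamma> k. random_config d (\<gamma> + h) = \<alpha>"
      by blast
  qed
  then have "random_config -` (subshift \<inter> - ?P) \<inter> space digit_measure = {}"
    by blast
  then have "emeasure config_law (subshift \<inter> - ?P) = 0"
    unfolding config_law_def emeasure_distr[OF measurable_random_config_subshift N] by simp
  then have "subshift \<inter> - ?P \<in> null_sets config_law"
    using N unfolding null_sets_def sets_config_law by blast
  moreover have "toeplitz_array x" if "x \<in> ?P" for x
  proof (rule toeplitz_arrayI_Gamma)
    fix h
    have "\<exists>k \<alpha>. \<forall>\<gamma>\<in>\<Gamma> k. x (\<gamma> + h) = \<alpha>"
      using that by simp
    then obtain k \<alpha> where "\<forall>\<gamma>\<in>\<Gamma> k. x (\<gamma> + h) = \<alpha>"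
      by blast
    moreover have "x (0 + h) = \<alpha>"
      using calculation subgrp_zero[OF subgrp_Gamma] by blast
    ultimately show "\<exists>k. \<forall>\<gamma>\<in>\<Gamma> k. x (\<gamma> + h) = x h"
      by auto
  qed
  then have "{x\<in>space config_law. \<not> toeplitz_array x} \<subseteq> subshift \<inter> - ?P"
    unfolding space_config_law by blast
  ultimately show ?thesis
    by (rule AE_I')
qed

lemma regular_shift_subshift: "regular_shift subshift"
  unfolding regular_shift_def
proof (intro exI[of _ config_law] conjI ballI allI)
  fix g A assume "A \<in> sets config_law"
  then show "emeasure config_law (shift g -` A \<inter> subshift) = emeasure config_law A"
    by (rule config_law_shift_invariant)
qed (fact prob_space_config_law sets_config_law AE_toeplitz_config_law)+

end

lemma (in infinite_normal_chain) ex_toeplitz_extension_infinite: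
  "\<exists>X :: ('g \<Rightarrow> bool) set. toeplitz_subshift X \<and> free_shift X \<and> regular_shift X \<and>
    almost_1_1_ext_odometer X \<Gamma>"
proof -
  obtain y0 where "y0 \<in> odometer \<Gamma>" "(\<Inter>n. y0 n) = {}"
    using ex_odometer_Inter_empty by blast
  then interpret toeplitz_construction \<Gamma> y0
    by unfold_locales
  show ?thesis
    using toeplitz_subshift_subshift free_shift_subshift regular_shift_subshift
      almost_1_1_ext_odometer_subshift by blast
qed

section \<open>Finite groups\<close>

locale finite_normal_chain = normal_chain \<Gamma> for \<Gamma> :: "nat \<Rightarrow> 'g::group_add set" +
  assumes finite_UNIV: "finite (UNIV :: 'g set)"
begin

lemma Gamma_eventually_trivial:
  obtains N where "\<Gamma> N = {0}"
proof -
  have "\<exists>n. g \<notin> \<Gamma> n" if "g \<noteq> 0" for g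
  proof -
    have "g \<notin> (\<Inter>n. \<Gamma> n)"
      using that by (simp only: Inter_Gamma) simp
    then show ?thesis
      by simp
  qed
  then obtain k where k: "\<And>g. g \<noteq> 0 \<Longrightarrow> g \<notin> \<Gamma> (k g)"
    by metis
  define N where "N = Max (range k)"
  have "g = 0" if "g \<in> \<Gamma> N" for g
  proof (rule ccontr)
    assume "g \<noteq> 0"
    moreover have "k g \<le> N"
      unfolding N_def using finite_UNIV by simp
    ultimately show False
      using k Gamma_antimono that by blast
  qed
  then have "\<Gamma> N = {0}"
    using subgrp_zero[OF subgrp_Gamma] by blast
  then show thesis
    by (rule that)
qed

lemma odometer_eq_lcoset_seq:
  assumes y: "y \<in> odometer \<Gamma>"
  obtains a where "y = (\<lambda>n. lcoset a (\<Gamma> n))"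
proof -
  obtain N where N: "\<Gamma> N = {0}"
    using Gamma_eventually_trivial by blast
  obtain a where a: "y N = lcoset a (\<Gamma> N)"
    using odometer_lcoset[OF y] by blast
  have "y n = lcoset a (\<Gamma> n)" for n
  proof (cases "n \<le> N")
    case True
    then show ?thesis
      using odometer_lcoset_down[OF y a] by blast
  next
    case False
    obtain b where b: "y n = lcoset b (\<Gamma> n)"
      using odometer_lcoset[OF y] by blast
    then have "lcoset b {0} = lcoset a {0}"
      using odometer_lcoset_down[OF y b, of N] False a N by simp
    then have "b = a"
      unfolding lcoset_def by simp
    then show ?thesis
      using b by simp
  qed
  then show thesis
    using that by blast
qed

definition point_config :: "'g \<Rightarrow> 'g \<Rightarrow> bool" where
  "point_config a = (\<lambda>h. h = a)"

definition points :: "('g \<Rightarrow> bool) set" where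
  "points = range point_config"

definition point_factor :: "('g \<Rightarrow> bool) \<Rightarrow> nat \<Rightarrow> 'g set" where
  "point_factor x n = lcoset (inv point_config x) (\<Gamma> n)"

lemma inj_point_config: "inj point_config"
  unfolding inj_def point_config_def by metis

lemma shift_point_config: "shift g (point_config a) = point_config (g + a)"
proof
  fix h
  have "- g + h = a \<longleftrightarrow> h = g + a"
    by (metis add_minus_cancel minus_add_cancel)
  then show "shift g (point_config a) h = point_config (g + a) h"
    unfolding shift_def point_config_def by simp
qed

lemma point_factor_point_config: "point_factor (point_config a) = (\<lambda>n. lcoset a (\<Gamma> n))"
  unfolding point_factor_def by (simp add: inv_f_f[OF inj_point_config])

lemma finite_points: "finite points"
  unfolding points_def using finite_UNIV by simp

lemma points_eq_orbit_closure: "points = orbit_closure (point_config 0)"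
proof -
  have "range (\<lambda>g. shift g (point_config 0)) = points"
    unfolding points_def shift_point_config by simp
  then show ?thesis
    unfolding orbit_closure_def using closure_closed[OF finite_imp_closed_fun[OF finite_points]]
    by simp
qed

lemma toeplitz_array_finite_group: "toeplitz_array (x :: 'g \<Rightarrow> bool)"
proof -
  have "finite_index {0::'g}"
    unfolding finite_index_def subgrp_def cosets_def using finite_UNIV by simp
  then show ?thesis
    unfolding toeplitz_array_def Per_def Per_val_def by blast
qed

lemma free_shift_points: "free_shift points"
  unfolding free_shift_def points_def
proof (intro ballI allI impI)
  fix x g assume "x \<in> range point_config" "shift g x = x"
  then obtain a where "point_config (g + a) = point_config a"
    using shift_point_config by auto
  then have "g + a + - a = a + - a"
    using inj_point_config by (simp add: inj_eq)
  then show "g = 0"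
    by (simp add: add.assoc)
qed

lemma regular_shift_points: "regular_shift points"
  unfolding regular_shift_def
proof (intro exI[of _ "uniform_count_measure points"] conjI ballI allI)
  show "prob_space (uniform_count_measure points)"
    using finite_points by (intro prob_space_uniform_count_measure) (auto simp: points_def)
  have "S \<in> sets borel" if "S \<subseteq> points" for S
    using that finite_points by (intro borel_closed finite_imp_closed_fun) (auto intro: finite_subset)
  then show "sets (uniform_count_measure points) = sets (restrict_space borel points)"
    unfolding sets_restrict_space sets_uniform_count_measure by blast
  fix g A assume "A \<in> sets (uniform_count_measure points)"
  then have A: "A \<subseteq> points"
    by (simp add: sets_uniform_count_measure)
  have closed: "shift g' x \<in> points" if "x \<in> points" for g' x
    using that shift_point_config unfolding points_def by auto
  have inverse: "shift (- g) (shift g x) = x" "shift g (shift (- g) x) = x" for x :: "'g \<Rightarrow> bool"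
    by (simp_all add: shift_shift shift_zero)
  have "bij_betw (shift g) (shift g -` A \<inter> points) A"
    using A closed inverse by (intro bij_betw_byWitness[where f'="shift (- g)"]) auto
  then have "card (shift g -` A \<inter> points) = card A"
    by (rule bij_betw_same_card)
  then show "emeasure (uniform_count_measure points) (shift g -` A \<inter> points) =
      emeasure (uniform_count_measure points) A"
    using A finite_points by (simp add: emeasure_uniform_count_measure)
next
  show "AE x in uniform_count_measure points. toeplitz_array x"
    by (simp add: toeplitz_array_finite_group)
qed

lemma almost_1_1_ext_odometer_points: "almost_1_1_ext_odometer points \<Gamma>"
  unfolding almost_1_1_ext_odometer_def
proof (intro exI[of _ point_factor] conjI)
  show "continuous_map (top_of_set points) (odometer_top \<Gamma>) point_factor"
    unfolding odometer_top_def continuous_map_in_subtopology continuous_map_componentwise_UNIV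
  proof (intro conjI allI)
    show "point_factor \<in> topspace (top_of_set points) \<rightarrow> odometer \<Gamma>"
      unfolding points_def using point_factor_point_config lcoset_seq_in_odometer by auto
    show "continuous_map (top_of_set points) (discrete_topology (cosets (\<Gamma> n))) (\<lambda>x. point_factor x n)"
      for n
      unfolding points_def
      using point_factor_point_config lcoset_in_cosets finite_imp_openin_fun[OF finite_points]
      by (intro continuous_map_discrete_topology_fibres) (auto simp: points_def)
  qed
  show "point_factor ` points = odometer \<Gamma>"
    unfolding points_def using point_factor_point_config lcoset_seq_in_odometer odometer_eq_lcoset_seq
    by (auto simp: image_iff) metis
  show "\<forall>g. \<forall>x\<in>points. point_factor (shift g x) = odometer_act g (point_factor x)"
    unfolding points_def odometer_act_def
    by (auto simp: shift_point_config point_factor_point_config plus_image_lcoset)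
  show "\<exists>y\<in>odometer \<Gamma>. \<exists>!x. x \<in> points \<and> point_factor x = y"
  proof (intro bexI ex1I)
    show "point_config 0 \<in> points \<and> point_factor (point_config 0) = (\<lambda>n. lcoset 0 (\<Gamma> n))"
      unfolding points_def by (simp add: point_factor_point_config)
    show "(\<lambda>n. lcoset 0 (\<Gamma> n)) \<in> odometer \<Gamma>"
      by (rule lcoset_seq_in_odometer)
    fix x assume x: "x \<in> points \<and> point_factor x = (\<lambda>n. lcoset 0 (\<Gamma> n))"
    then obtain a where a: "x = point_config a"
      unfolding points_def by blast
    obtain N where N: "\<Gamma> N = {0}"
      using Gamma_eventually_trivial by blast
    have "lcoset a (\<Gamma> N) = lcoset 0 (\<Gamma> N)"
      using x a point_factor_point_config by metis
    then have "a = 0"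
      unfolding N lcoset_def by simp
    then show "x = point_config 0"
      using a by simp
  qed
qed

lemma ex_toeplitz_extension_finite:
  "\<exists>X :: ('g \<Rightarrow> bool) set. toeplitz_subshift X \<and> free_shift X \<and> regular_shift X \<and>
    almost_1_1_ext_odometer X \<Gamma>"
  using points_eq_orbit_closure toeplitz_array_finite_group free_shift_points regular_shift_points
    almost_1_1_ext_odometer_points
  unfolding toeplitz_subshift_def by blast

end

theorem proposition3p8:
  fixes \<Gamma> :: "nat \<Rightarrow> 'g::{group_add,countable} set"
  assumes "residually_finite TYPE('g)"
    and "\<forall>n. normal_subgrp (\<Gamma> n) \<and> finite_index (\<Gamma> n)"
    and "\<forall>n. \<Gamma> (Suc n) \<subseteq> \<Gamma> n"
    and "(\<Inter>n. \<Gamma> n) = {0}"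
  shows "\<exists>X :: ('g \<Rightarrow> bool) set. toeplitz_subshift X \<and> free_shift X \<and> regular_shift X \<and>
           almost_1_1_ext_odometer X \<Gamma>"
proof -
  interpret normal_chain \<Gamma>
    using assms(2-4) by unfold_locales auto
  show ?thesis
  proof (cases "finite (UNIV :: 'g set)")
    case True
    then interpret finite_normal_chain \<Gamma>
      by unfold_locales
    show ?thesis
      by (rule ex_toeplitz_extension_finite)
  next
    case False
    then interpret infinite_normal_chain \<Gamma>
      by unfold_locales
    show ?thesis
      by (rule ex_toeplitz_extension_infinite)
  qed
qed

end
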